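(* Let $n$ agents, agent $i$ holding a local dataset $D_i$, run $T$ iterations of the following perturbed decentralized SGD: at iteration $t$, each agent $i$ computes a stochastic gradient $g_i^{(t)}$ of its local loss on $D_i$ at its current parameter $\tilde x_i^{(t)}$, clips it as $\hat g_i^{(t)}=\min\{1,C/|g_i^{(t)}|\}\,g_i^{(t)}$ with threshold $C>0$, and the perturbed gradient vector is $\tilde{\mathbf{g}}^{(t)}=\hat{\mathbf{g}}^{(t)}+\mathbf{v}^{(t)}$ with $\mathbf{v}^{(t)}\sim\mathcal{N}(\mathbf{0},\mathbf{R})$ drawn afresh each iteration, where $\mathbf{R}\in\mathbb{R}^{n\times n}$ is positive definite ($\mathbf{R}\succ0$); the models are then updated as $\tilde{\mathbf{x}}^{(t+1)}=\mathbf{W}(\tilde{\mathbf{x}}^{(t)}-\eta_t\tilde{\mathbf{g}}^{(t)})$ for a mixing matrix $\mathbf{W}$ and step sizes $\eta_t$. Then, for any $\delta\in(0,1)$, this mechanism (whose output is the perturbed local models $\tilde{\mathbf{x}}^{(t)}$ shared over the $T$ iterations) is agent-level $(\varepsilon,\delta)$-differentially private with $$\varepsilon\le 2C^2T\max_{i}[\mathbf{R}^{-1}]_{ii}+2C\sqrt{2T\log(1/\delta)\max_{i}[\mathbf{R}^{-1}]_{ii}}.$$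
   Context: Two collections of datasets $D=\{D_1,\dots,D_n\}$ and $D'=\{D'_1,\dots,D'_n\}$ are agent-level neighbors if there is exactly one $j$ with $D_j\ne D'_j$ and $D_i=D'_i$ for all $i\ne j$. A randomized mechanism $M$ is agent-level $(\varepsilon,\delta)$-differentially private if for all agent-level neighboring $D,D'$ and all measurable output sets $S$, $\Pr[M(D)\in S]\le e^{\varepsilon}\Pr[M(D')\in S]+\delta$. Here $\max_i$ ranges over the agents $i\in\{1,\dots,n\}$ and $\log$ is the natural logarithm. *)

theory Defs
  imports "HOL-Probability.Probability"
begin

definition pos_def_mat :: "real^'n^'n \<Rightarrow> bool" where
  "pos_def_mat R \<longleftrightarrow> transpose R = R \<and> (\<forall>x. x \<noteq> 0 \<longrightarrow> x \<bullet> (R *v x) > 0)"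

definition mvnormal :: "real^'n^'n \<Rightarrow> (real^'n) measure" where
  "mvnormal R = density lborel (\<lambda>x. ennreal
     ((2*pi) powr (- real CARD('n) / 2) / sqrt (det R) * exp (- (x \<bullet> (matrix_inv R *v x)) / 2)))"

text \<open>Noise matrix for one iteration: rows indexed by agents 'n, columns by the
  model coordinates 'd; each column is independently N(0,R).\<close>
definition noise_dist :: "real^'n^'n \<Rightarrow> (real^'d^'n) measure" where
  "noise_dist R = distr (PiM UNIV (\<lambda>_::'d. mvnormal R)) borel (\<lambda>f. \<chi> i. \<chi> k. f k $ i)"

definition clip :: "real \<Rightarrow> real^'d \<Rightarrow> real^'d" where
  "clip C g = min 1 (C / norm g) *\<^sub>R g"

text \<open>Trajectory of perturbed decentralized SGD. sg t i Di x xi is the stochastic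
  gradient of agent i at iteration t on local dataset Di at parameter x, using the
  sampling randomness xi.\<close>
primrec dsgd_traj ::
  "(nat \<Rightarrow> 'n \<Rightarrow> 'data \<Rightarrow> real^'d \<Rightarrow> 's \<Rightarrow> real^'d) \<Rightarrow> real \<Rightarrow> real^'n^'n \<Rightarrow> (nat \<Rightarrow> real)
   \<Rightarrow> real^'d^'n \<Rightarrow> ('n::finite \<Rightarrow> 'data) \<Rightarrow> 's \<Rightarrow> (nat \<Rightarrow> real^'d^'n) \<Rightarrow> nat \<Rightarrow> real^'d^'n" where
  "dsgd_traj sg C W \<eta> x0 D \<xi> V 0 = x0"
| "dsgd_traj sg C W \<eta> x0 D \<xi> V (Suc t) =
     (let X = dsgd_traj sg C W \<eta> x0 D \<xi> V t;
          G = (\<chi> i. clip C (sg t i (D i) (X $ i) \<xi>))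
      in W ** (X - \<eta> t *\<^sub>R (G + V t)))"

definition dsgd_mech ::
  "'s measure \<Rightarrow> (nat \<Rightarrow> 'n \<Rightarrow> 'data \<Rightarrow> real^'d \<Rightarrow> 's \<Rightarrow> real^'d) \<Rightarrow> real \<Rightarrow> real^'n^'n
   \<Rightarrow> real^'n^'n \<Rightarrow> (nat \<Rightarrow> real) \<Rightarrow> real^'d^'n \<Rightarrow> nat \<Rightarrow> ('n::finite \<Rightarrow> 'data)
   \<Rightarrow> (nat \<Rightarrow> real^'d^'n) measure" where
  "dsgd_mech Q sg C R W \<eta> x0 T D =
     distr (Q \<Otimes>\<^sub>M PiM {..<T} (\<lambda>_. noise_dist R)) (PiM {..T} (\<lambda>_. borel))
       (\<lambda>(\<xi>, V). restrict (dsgd_traj sg C W \<eta> x0 D \<xi> V) {..T})"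

definition agent_neighbors :: "('n \<Rightarrow> 'data) \<Rightarrow> ('n \<Rightarrow> 'data) \<Rightarrow> bool" where
  "agent_neighbors D D' \<longleftrightarrow> (\<exists>j. D j \<noteq> D' j \<and> (\<forall>i. i \<noteq> j \<longrightarrow> D i = D' i))"

definition agent_level_DP :: "(('n \<Rightarrow> 'data) \<Rightarrow> 'b measure) \<Rightarrow> real \<Rightarrow> real \<Rightarrow> bool" where
  "agent_level_DP M \<epsilon> \<delta> \<longleftrightarrow>
     (\<forall>D D'. agent_neighbors D D' \<longrightarrow>
        (\<forall>S \<in> sets (M D). measure (M D) S \<le> exp \<epsilon> * measure (M D') S + \<delta>))"

end

theory Submission
  imports Defs
begin

text \<open>Fix the sampling randomness. For neighbouring collections of datasets the clipped
  gradient matrices differ in a single row, by at most \<open>2 C\<close> in norm. Each iteration adds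
  independent \<open>N(0, R)\<close> noise to every column, so by the Gaussian shift formula the law of the
  trajectory under one collection has density \<open>exp L\<close> with respect to the other, where the
  privacy loss \<open>L\<close> is a sum of Gaussian log-likelihood ratios, one per iteration. Iterating the
  Gaussian moment generating function gives \<open>E exp ((1 + l) L) \<le> exp (l (1 + l) \<rho>)\<close> with
  \<open>\<rho> = 2 C\<^sup>2 T max\<^sub>i [R\<^sup>-\<^sup>1]\<^sub>i\<^sub>i\<close>, i.e. \<open>\<rho>\<close>-zero-concentrated privacy, and a Chernoff bound turns this into
  the stated \<open>(\<epsilon>, \<delta>)\<close> guarantee, which survives averaging over the sampling randomness.\<close>

section \<open>Gaussian integrals\<close>

definition principal_block :: "'n::finite set \<Rightarrow> real^'n^'n \<Rightarrow> real^'n^'n" where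
  "principal_block I A = (\<chi> i j. if i \<in> I \<and> j \<in> I then A$i$j else if i = j then 1 else 0)"

definition schur_complement :: "real^'n::finite^'n \<Rightarrow> 'n \<Rightarrow> real^'n^'n" where
  "schur_complement A k = (\<chi> i j. A$i$j - A$i$k * A$k$j / A$k$k)"

definition row_elim_matrix :: "'n::finite set \<Rightarrow> 'n \<Rightarrow> ('n \<Rightarrow> real) \<Rightarrow> real^'n^'n" where
  "row_elim_matrix J k c = (\<chi> i j. (if i = j then 1 else 0) - (if i \<in> J \<and> j = k then c i else 0))"

definition quad_form :: "'n::finite set \<Rightarrow> real^'n^'n \<Rightarrow> ('n \<Rightarrow> real) \<Rightarrow> real" where
  "quad_form I A x = (\<Sum>i\<in>I. \<Sum>j\<in>I. x i * A$i$j * x j)"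

lemma principal_block_UNIV [simp]: "principal_block UNIV A = A"
  by (simp add: principal_block_def vec_eq_iff)

lemma principal_block_empty: "principal_block {} A = mat 1"
  by (simp add: principal_block_def mat_def vec_eq_iff)

lemma det_row_elim_matrix:
  assumes "k \<notin> J"
  shows "det (row_elim_matrix J k c) = 1"
proof -
  have "finite J" by simp
  then show ?thesis using assms
  proof (induction J rule: finite_induct)
    case empty
    have "row_elim_matrix {} k c = mat 1" by (simp add: row_elim_matrix_def mat_def vec_eq_iff)
    then show ?case by simp
  next
    case (insert i J)
    let ?A = "row_elim_matrix J k c"
    have "i \<noteq> k" using insert by auto
    moreover have "row_elim_matrix (insert i J) k c
        = (\<chi> r. if r = i then row i ?A + (- c i) *s row k ?A else row r ?A)"
      using insert(2,4) by (auto simp: row_elim_matrix_def vec_eq_iff row_def)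
    ultimately have "det (row_elim_matrix (insert i J) k c) = det ?A"
      using det_row_operation[of i k ?A "- c i"] by simp
    then show ?case using insert by simp
  qed
qed

lemma row_elim_matrix_mult_nth:
  "(row_elim_matrix J k c ** E) $ i $ j = E$i$j - (if i \<in> J then c i * E$k$j else 0)"
proof -
  have "(row_elim_matrix J k c ** E) $ i $ j =
     (\<Sum>l\<in>UNIV. (if i = l then E$l$j else 0) - (if i \<in> J \<and> l = k then c i * E$l$j else 0))"
    by (auto simp: matrix_matrix_mult_def row_elim_matrix_def left_diff_distrib intro!: sum.cong)
  then show ?thesis by (simp add: sum_subtractf)
qed

lemma mult_transpose_row_elim_matrix_nth:
  "(E ** transpose (row_elim_matrix J k c)) $ i $ j = E$i$j - (if j \<in> J then c j * E$i$k else 0)"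
proof -
  have "(E ** transpose (row_elim_matrix J k c)) $ i $ j =
     (\<Sum>l\<in>UNIV. (if j = l then E$i$l else 0) - (if j \<in> J \<and> l = k then c j * E$i$l else 0))"
    by (auto simp: matrix_matrix_mult_def row_elim_matrix_def transpose_def right_diff_distrib
        intro!: sum.cong)
  then show ?thesis by (simp add: sum_subtractf)
qed

text \<open>Symmetric Gaussian elimination of the pivot \<open>k\<close> turns the block on \<open>insert k I\<close> into
  the diagonal block \<open>A$k$k\<close> next to the Schur complement on \<open>I\<close>.\<close>
lemma det_principal_block_insert:
  fixes A :: "real^'n::finite^'n"
  assumes k: "k \<notin> I" and a: "A$k$k \<noteq> 0" and sym: "\<And>i j. A$i$j = A$j$i"
  shows "det (principal_block (insert k I) A) = A$k$k * det (principal_block I (schur_complement A k))"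
proof -
  let ?G = "row_elim_matrix I k (\<lambda>i. A$i$k / A$k$k)"
  let ?E = "principal_block (insert k I) A"
  let ?S = "principal_block I (schur_complement A k)"
  have elim: "?G ** ?E ** transpose ?G = (\<chi> i. if i = k then A$k$k *s row k ?S else row i ?S)"
  proof (intro vec_eq_iff[THEN iffD2] allI)
    fix i j
    show "(?G ** ?E ** transpose ?G) $ i $ j = (\<chi> i. if i = k then A$k$k *s row k ?S else row i ?S) $ i $ j"
      unfolding mult_transpose_row_elim_matrix_nth row_elim_matrix_mult_nth
      using k a sym[of i k] sym[of j k] sym[of k j]
      by (auto simp: principal_block_def schur_complement_def row_def field_simps)
  qed
  have "det ?E = det (?G ** ?E ** transpose ?G)"
    by (simp add: det_mul det_row_elim_matrix[OF k])
  also have "\<dots> = A$k$k * det (\<chi> i. if i = k then row k ?S else row i ?S)"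
    unfolding elim by (rule det_row_mul)
  also have "(\<chi> i. if i = k then row k ?S else row i ?S) = ?S"
    by (simp add: vec_eq_iff row_def)
  finally show ?thesis .
qed

lemma quad_form_cong: "(\<And>i. i \<in> I \<Longrightarrow> x i = y i) \<Longrightarrow> quad_form I A x = quad_form I A y"
  unfolding quad_form_def by (intro sum.cong refl) auto

lemma borel_measurable_quad_form [measurable]:
  "quad_form I A \<in> borel_measurable (PiM I (\<lambda>_. lborel))"
  unfolding quad_form_def by measurable

lemma quad_form_insert:
  fixes A :: "real^'n::finite^'n"
  assumes k: "k \<notin> I" and a: "A$k$k \<noteq> 0" and sym: "\<And>i j. A$i$j = A$j$i"
  shows "quad_form (insert k I) A y
     = A$k$k * (y k + (\<Sum>j\<in>I. A$k$j * y j) / A$k$k)\<^sup>2 + quad_form I (schur_complement A k) y"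
proof -
  define S where "S = (\<Sum>j\<in>I. A$k$j * y j)"
  have row_k: "(\<Sum>j\<in>I. y k * A$k$j * y j) = y k * S"
    by (simp add: S_def sum_distrib_left mult.assoc)
  have col_k: "(\<Sum>i\<in>I. y i * A$i$k * y k) = y k * S"
    unfolding S_def sum_distrib_left by (rule sum.cong) (auto simp: sym[of _ k])
  have expand: "quad_form (insert k I) A y = y k * A$k$k * y k + (\<Sum>j\<in>I. y k * A$k$j * y j)
      + (\<Sum>i\<in>I. y i * A$i$k * y k) + quad_form I A y"
    using k by (simp add: quad_form_def sum.distrib algebra_simps)
  have "quad_form I (schur_complement A k) y
      = (\<Sum>i\<in>I. \<Sum>j\<in>I. y i * A$i$j * y j - (y i * A$k$i) * (A$k$j * y j) / A$k$k)"
    unfolding quad_form_def schur_complement_def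
  proof (intro sum.cong refl)
    fix i j
    show "y i * (\<chi> i j. A$i$j - A$i$k * A$k$j / A$k$k) $ i $ j * y j
        = y i * A$i$j * y j - y i * A$k$i * (A$k$j * y j) / A$k$k"
      using sym[of i k] by (simp add: algebra_simps)
  qed
  also have "\<dots> = (\<Sum>i\<in>I. (\<Sum>j\<in>I. y i * A$i$j * y j) - (y i * A$k$i) * S / A$k$k)"
    unfolding sum_subtractf S_def sum_divide_distrib[symmetric] sum_distrib_left by simp
  also have "\<dots> = quad_form I A y - (\<Sum>i\<in>I. y i * A$k$i) * S / A$k$k"
    unfolding sum_subtractf quad_form_def sum_divide_distrib[symmetric] sum_distrib_right ..
  also have "(\<Sum>i\<in>I. y i * A$k$i) = S"
    by (simp add: S_def mult.commute)
  finally have schur: "quad_form I (schur_complement A k) y = quad_form I A y - S * S / A$k$k" .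
  show ?thesis
    unfolding expand row_k col_k schur S_def[symmetric] using a
    by (simp add: power2_eq_square field_simps)
qed

lemma nn_integral_exp_shifted_square:
  fixes a s :: real
  assumes a: "a > 0"
  shows "(\<integral>\<^sup>+t. ennreal (exp (- (a * (t + s)\<^sup>2) / 2)) \<partial>lborel) = ennreal (sqrt (2 * pi / a))"
proof -
  define \<sigma> where "\<sigma> = 1 / sqrt a"
  have \<sigma>: "\<sigma> > 0" "\<sigma>\<^sup>2 = 1 / a" using a by (auto simp: \<sigma>_def power_divide)
  have density: "exp (- (a * (t + s)\<^sup>2) / 2) = sqrt (2 * pi / a) * normal_density (-s) \<sigma> t" for t
    unfolding normal_density_def \<sigma>(2) using a by (simp add: field_simps)
  have normal: "(\<integral>\<^sup>+t. ennreal (normal_density (-s) \<sigma> t) \<partial>lborel) = 1"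
  proof -
    interpret prob_space "density lborel (normal_density (-s) \<sigma>)"
      using prob_space_normal_density \<sigma> by blast
    show ?thesis using emeasure_space_1 by (simp add: emeasure_density)
  qed
  have "(\<integral>\<^sup>+t. ennreal (exp (- (a * (t + s)\<^sup>2) / 2)) \<partial>lborel)
      = (\<integral>\<^sup>+t. ennreal (sqrt (2 * pi / a)) * ennreal (normal_density (-s) \<sigma> t) \<partial>lborel)"
    unfolding density using a by (intro nn_integral_cong) (simp add: ennreal_mult normal_density_nonneg)
  also have "\<dots> = ennreal (sqrt (2 * pi / a))"
    by (simp add: nn_integral_cmult normal)
  finally show ?thesis .
qed

interpretation lborel_product: product_sigma_finite "\<lambda>_::'n. lborel"
  by standard

lemma quad_form_pos_imp_pivot_pos:
  assumes "\<And>x. (\<exists>i\<in>insert k I. x i \<noteq> 0) \<Longrightarrow> quad_form (insert k I) A x > 0" and "k \<notin> I"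
  shows "A$k$k > 0"
proof -
  have "i \<in> I \<Longrightarrow> i \<noteq> k" for i using \<open>k \<notin> I\<close> by auto
  then have "quad_form (insert k I) A (\<lambda>i. if i = k then 1 else 0) = A$k$k"
    using \<open>k \<notin> I\<close> by (simp add: quad_form_def cong: sum.cong)
  moreover have "quad_form (insert k I) A (\<lambda>i. if i = k then 1 else 0) > 0"
    by (rule assms(1)) auto
  ultimately show ?thesis by simp
qed

lemma quad_form_schur_complement_pos:
  fixes A :: "real^'n::finite^'n"
  assumes k: "k \<notin> I" and sym: "\<And>i j. A$i$j = A$j$i"
    and pos: "\<And>x. (\<exists>i\<in>insert k I. x i \<noteq> 0) \<Longrightarrow> quad_form (insert k I) A x > 0"
    and x: "\<exists>i\<in>I. x i \<noteq> 0"
  shows "quad_form I (schur_complement A k) x > 0"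
proof -
  have a: "A$k$k > 0" using pos k by (rule quad_form_pos_imp_pivot_pos)
  define y where "y = x(k := - (\<Sum>j\<in>I. A$k$j * x j) / A$k$k)"
  have y: "y j = x j" if "j \<in> I" for j using that k by (auto simp: y_def)
  then have "(\<Sum>j\<in>I. A$k$j * y j) = (\<Sum>j\<in>I. A$k$j * x j)" by simp
  then have "quad_form (insert k I) A y = quad_form I (schur_complement A k) x"
    unfolding quad_form_insert[OF k a[THEN less_imp_neq, symmetric] sym]
    using quad_form_cong[of I y x "schur_complement A k"] y a by (simp add: y_def)
  moreover have "quad_form (insert k I) A y > 0"
    by (rule pos) (use x y in auto)
  ultimately show ?thesis by simp
qed

lemma nn_integral_exp_quad_form_insert:
  fixes A :: "real^'n::finite^'n"
  assumes k: "k \<notin> I" and sym: "\<And>i j. A$i$j = A$j$i" and a: "A$k$k > 0"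
  shows "(\<integral>\<^sup>+x. ennreal (exp (- quad_form (insert k I) A x / 2)) \<partial>PiM (insert k I) (\<lambda>_. lborel))
    = (\<integral>\<^sup>+x. ennreal (exp (- quad_form I (schur_complement A k) x / 2)) \<partial>PiM I (\<lambda>_. lborel))
      * ennreal (sqrt (2 * pi / A$k$k))"
proof -
  let ?S = "schur_complement A k"
  have inner: "(\<integral>\<^sup>+t. ennreal (exp (- quad_form (insert k I) A (x(k := t)) / 2)) \<partial>lborel)
      = ennreal (exp (- quad_form I ?S x / 2)) * ennreal (sqrt (2 * pi / A$k$k))" for x
  proof -
    define s where "s = (\<Sum>j\<in>I. A$k$j * x j) / A$k$k"
    have "(\<Sum>j\<in>I. A$k$j * (x(k:=t)) j) = (\<Sum>j\<in>I. A$k$j * x j)" for t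
      using k by (intro sum.cong) auto
    moreover have "quad_form I ?S (x(k:=t)) = quad_form I ?S x" for t
      using k by (intro quad_form_cong) auto
    ultimately have "quad_form (insert k I) A (x(k := t)) = A$k$k * (t + s)\<^sup>2 + quad_form I ?S x" for t
      unfolding quad_form_insert[OF k a[THEN less_imp_neq, symmetric] sym] by (simp add: s_def)
    then have "(\<integral>\<^sup>+t. ennreal (exp (- quad_form (insert k I) A (x(k := t)) / 2)) \<partial>lborel)
        = (\<integral>\<^sup>+t. ennreal (exp (- quad_form I ?S x / 2)) * ennreal (exp (- (A$k$k * (t + s)\<^sup>2) / 2)) \<partial>lborel)"
      by (intro nn_integral_cong) (simp add: ennreal_mult[symmetric] exp_add[symmetric] field_simps)
    also have "\<dots> = ennreal (exp (- quad_form I ?S x / 2)) * ennreal (sqrt (2 * pi / A$k$k))"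
      using nn_integral_exp_shifted_square[OF a, of s] by (simp add: nn_integral_cmult)
    finally show ?thesis .
  qed
  have "(\<integral>\<^sup>+x. ennreal (exp (- quad_form (insert k I) A x / 2)) \<partial>PiM (insert k I) (\<lambda>_. lborel))
     = (\<integral>\<^sup>+x. (\<integral>\<^sup>+t. ennreal (exp (- quad_form (insert k I) A (x(k := t)) / 2)) \<partial>lborel)
         \<partial>PiM I (\<lambda>_. lborel))"
    by (rule lborel_product.product_nn_integral_insert) (use k in auto)
  also have "\<dots> = (\<integral>\<^sup>+x. ennreal (exp (- quad_form I ?S x / 2)) \<partial>PiM I (\<lambda>_. lborel))
      * ennreal (sqrt (2 * pi / A$k$k))"
    unfolding inner by (rule nn_integral_multc) measurable
  finally show ?thesis .
qed

lemma gaussian_integral_quad_form: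
  fixes A :: "real^'n::finite^'n"
  assumes "\<And>i j. A$i$j = A$j$i" and "\<And>x. (\<exists>i\<in>I. x i \<noteq> 0) \<Longrightarrow> quad_form I A x > 0"
  shows "det (principal_block I A) > 0 \<and>
    (\<integral>\<^sup>+x. ennreal (exp (- quad_form I A x / 2)) \<partial>PiM I (\<lambda>_. lborel))
      = ennreal ((2*pi) powr (real (card I) / 2) / sqrt (det (principal_block I A)))"
proof -
  have "finite I" by simp
  then show ?thesis using assms
  proof (induction I arbitrary: A rule: finite_induct)
    case empty
    then show ?case by (simp add: principal_block_empty quad_form_def PiM_empty)
  next
    case (insert k I)
    note sym = insert.prems(1) and pos = insert.prems(2)
    define a where "a = A$k$k"
    define S where "S = schur_complement A k"
    have a: "a > 0" unfolding a_def using pos insert.hyps(2) by (rule quad_form_pos_imp_pivot_pos)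
    have "S$i$j = S$j$i" for i j
      unfolding S_def schur_complement_def using sym[of i j] sym[of i k] sym[of j k] by simp
    moreover have "quad_form I S x > 0" if "\<exists>i\<in>I. x i \<noteq> 0" for x
      unfolding S_def using insert.hyps(2) sym pos that by (rule quad_form_schur_complement_pos)
    ultimately have det_S: "det (principal_block I S) > 0"
      and int_S: "(\<integral>\<^sup>+x. ennreal (exp (- quad_form I S x / 2)) \<partial>PiM I (\<lambda>_. lborel))
        = ennreal ((2*pi) powr (real (card I) / 2) / sqrt (det (principal_block I S)))"
      using insert.IH[of S] by blast+
    have det: "det (principal_block (insert k I) A) = a * det (principal_block I S)"
      unfolding a_def S_def by (rule det_principal_block_insert) (use insert.hyps a a_def sym in auto)
    have "(\<integral>\<^sup>+x. ennreal (exp (- quad_form (insert k I) A x / 2)) \<partial>PiM (insert k I) (\<lambda>_. lborel))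
       = ennreal ((2*pi) powr (real (card I) / 2) / sqrt (det (principal_block I S)) * sqrt (2 * pi / a))"
      unfolding nn_integral_exp_quad_form_insert[OF insert.hyps(2) sym a[unfolded a_def]]
        int_S S_def[symmetric] a_def[symmetric]
      by (rule ennreal_mult[symmetric]) (use a det_S in auto)
    also have "(2*pi) powr (real (card I) / 2) / sqrt (det (principal_block I S)) * sqrt (2 * pi / a)
        = (2*pi) powr (real (card (insert k I)) / 2) / sqrt (det (principal_block (insert k I) A))"
    proof -
      have "(2*pi) powr (real (card (insert k I)) / 2) = (2*pi) powr (real (card I) / 2) * sqrt (2*pi)"
        using insert.hyps
        by (simp add: powr_add[symmetric] add_divide_distrib add.commute powr_half_sqrt[symmetric])
      then show ?thesis
        unfolding det using a det_S by (simp add: real_sqrt_mult real_sqrt_divide field_simps)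
    qed
    finally show ?case using det a det_S by simp
  qed
qed

lemma pos_def_mat_nth_sym:
  assumes "pos_def_mat R"
  shows "R$i$j = R$j$i"
proof -
  have "transpose R $ j $ i = R $ j $ i" using assms by (simp add: pos_def_mat_def)
  then show ?thesis by (simp add: transpose_def)
qed

lemma pos_def_mat_diag_pos:
  assumes "pos_def_mat R"
  shows "R$j$j > 0"
proof -
  have "axis j 1 \<bullet> (R *v axis j 1) > 0"
    using assms unfolding pos_def_mat_def by simp
  then show ?thesis by (simp add: inner_axis' matrix_vector_mult_basis column_def)
qed

lemma pos_def_mat_Max_diag_pos:
  assumes "pos_def_mat P"
  shows "(MAX i. P$i$i) > 0"
proof -
  have "P$i$i > 0" for i using assms by (rule pos_def_mat_diag_pos)
  then show ?thesis by (simp add: Max_gr_iff)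
qed

lemma pos_def_mat_inverse:
  fixes R :: "real^'n::finite^'n"
  assumes "pos_def_mat R"
  shows "R ** matrix_inv R = mat 1" "matrix_inv R ** R = mat 1"
proof -
  have "x = 0" if "R *v x = 0" for x
    using assms that unfolding pos_def_mat_def by force
  then have "invertible R"
    using matrix_left_invertible_ker invertible_left_inverse by blast
  then have "\<exists>A'. R ** A' = mat 1 \<and> A' ** R = mat 1" unfolding invertible_def .
  then have "R ** matrix_inv R = mat 1 \<and> matrix_inv R ** R = mat 1"
    unfolding matrix_inv_def by (rule someI_ex)
  then show "R ** matrix_inv R = mat 1" "matrix_inv R ** R = mat 1" by auto
qed

lemma pos_def_mat_matrix_inv:
  fixes R :: "real^'n::finite^'n"
  assumes R: "pos_def_mat R"
  shows "pos_def_mat (matrix_inv R)"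
  unfolding pos_def_mat_def
proof (intro conjI allI impI)
  let ?P = "matrix_inv R"
  have "transpose ?P ** R = mat 1"
    using arg_cong[OF pos_def_mat_inverse(1)[OF R], of transpose] R
    by (simp add: matrix_transpose_mul pos_def_mat_def)
  then show "transpose ?P = ?P"
    by (metis pos_def_mat_inverse(1)[OF R] matrix_mul_assoc matrix_mul_lid matrix_mul_rid)
  fix x :: "real^'n" assume "x \<noteq> 0"
  define y where "y = ?P *v x"
  have x: "x = R *v y"
    unfolding y_def matrix_vector_mul_assoc pos_def_mat_inverse(1)[OF R] by simp
  with \<open>x \<noteq> 0\<close> have "y \<noteq> 0" by auto
  then have "y \<bullet> (R *v y) > 0"
    using R unfolding pos_def_mat_def by blast
  also have "y \<bullet> (R *v y) = x \<bullet> (?P *v x)"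
    by (subst inner_commute, subst x[symmetric]) (simp add: y_def)
  finally show "x \<bullet> (?P *v x) > 0" .
qed

lemma det_matrix_inv_mult: "pos_def_mat R \<Longrightarrow> det (matrix_inv R) * det R = 1"
  using pos_def_mat_inverse(2) det_mul by (metis det_I)

lemma inner_matrix_vector_mult_eq_quad_form:
  fixes P :: "real^'n::finite^'n"
  shows "x \<bullet> (P *v x) = quad_form UNIV P (vec_nth x)"
  by (simp add: quad_form_def inner_vec_def matrix_vector_mult_def sum_distrib_left mult.assoc)

lemma gaussian_integral_pos_def_mat:
  fixes P :: "real^'n::finite^'n"
  assumes "pos_def_mat P"
  shows "det P > 0 \<and> (\<integral>\<^sup>+x. ennreal (exp (- quad_form UNIV P x / 2)) \<partial>PiM UNIV (\<lambda>_. lborel))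
     = ennreal ((2*pi) powr (real CARD('n) / 2) / sqrt (det P))"
proof -
  have "quad_form UNIV P x > 0" if "\<exists>i\<in>UNIV. x i \<noteq> 0" for x
  proof -
    have "vec_lambda x \<noteq> 0" using that by (auto simp: vec_eq_iff)
    then have "vec_lambda x \<bullet> (P *v vec_lambda x) > 0"
      using assms unfolding pos_def_mat_def by blast
    then show ?thesis by (simp add: inner_matrix_vector_mult_eq_quad_form vec_lambda_inverse)
  qed
  with gaussian_integral_quad_form[of P UNIV] pos_def_mat_nth_sym[OF assms] show ?thesis
    by simp
qed

lemma det_pos_if_pos_def_mat: "pos_def_mat P \<Longrightarrow> det P > 0"
  using gaussian_integral_pos_def_mat by blast

lemma borel_measurable_vec_lambda_PiM [measurable]:
  "(vec_lambda :: ('n \<Rightarrow> real) \<Rightarrow> real^'n) \<in> borel_measurable (PiM UNIV (\<lambda>_::'n::finite. lborel))"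
proof -
  have "(\<lambda>x. (vec_lambda x :: real^'n) \<bullet> axis i 1) \<in> borel_measurable (PiM UNIV (\<lambda>_::'n. lborel))" for i
    by (simp add: inner_axis)
  then show ?thesis
    by (subst borel_measurable_euclidean_space) (auto simp: Basis_vec_def Basis_real_def)
qed

lemma lborel_eq_distr_vec_lambda:
  "(lborel :: (real^'n::finite) measure) = distr (PiM UNIV (\<lambda>_::'n. lborel)) borel vec_lambda"
proof (rule lborel_eqI)
  fix l u :: "real^'n" assume le: "\<And>b. b \<in> Basis \<Longrightarrow> l \<bullet> b \<le> u \<bullet> b"
  have le': "l$i \<le> u$i" for i using le[of "axis i 1"] by (simp add: inner_axis)
  have box: "vec_lambda -` box l u \<inter> space (PiM UNIV (\<lambda>_::'n. lborel)) = PiE UNIV (\<lambda>i. {l$i<..<u$i})"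
    by (auto simp: mem_box_cart space_PiM PiE_def Pi_def)
  have Basis: "(Basis :: (real^'n) set) = range (\<lambda>i. axis i 1)"
    by (auto simp: Basis_vec_def)
  have inj: "inj (\<lambda>i::'n. axis i (1::real))"
    by (auto simp: inj_def axis_eq_axis)
  have "emeasure (distr (PiM UNIV (\<lambda>_::'n. lborel)) borel vec_lambda) (box l u)
      = (\<Prod>i\<in>UNIV. emeasure lborel {l$i<..<u$i})"
    by (simp add: emeasure_distr box lborel_product.emeasure_PiM)
  also have "\<dots> = ennreal (\<Prod>i\<in>UNIV. u$i - l$i)"
    using le' by (simp add: prod_ennreal)
  also have "(\<Prod>i\<in>UNIV. u$i - l$i) = (\<Prod>b\<in>Basis. (u - l) \<bullet> b)"
    unfolding Basis prod.reindex[OF inj] by (simp add: inner_axis)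
  finally show "emeasure (distr (PiM UNIV (\<lambda>_::'n. lborel)) borel vec_lambda) (box l u)
      = (\<Prod>b\<in>Basis. (u - l) \<bullet> b)" .
qed simp

lemma borel_measurable_bounded_linear: "bounded_linear f \<Longrightarrow> f \<in> borel_measurable borel"
  by (intro borel_measurable_continuous_onI linear_continuous_on)

lemma borel_measurable_matrix_vector_mult [measurable (raw)]:
  fixes P :: "real^'m::finite^'n::finite"
  shows "f \<in> borel_measurable M \<Longrightarrow> (\<lambda>x. P *v f x) \<in> borel_measurable M"
  using measurable_compose borel_measurable_bounded_linear[OF matrix_vector_mul_bounded_linear] by blast

lemma borel_measurable_vec_nth [measurable (raw)]:
  fixes f :: "'a \<Rightarrow> 'b::euclidean_space^'m::finite"
  shows "f \<in> borel_measurable M \<Longrightarrow> (\<lambda>x. f x $ i) \<in> borel_measurable M"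
  using measurable_compose borel_measurable_bounded_linear[OF bounded_linear_vec_nth] by blast

lemma borel_measurable_vecI:
  fixes g :: "'a \<Rightarrow> 'b::euclidean_space^'m::finite"
  assumes "\<And>i. (\<lambda>x. g x $ i) \<in> borel_measurable M"
  shows "g \<in> borel_measurable M"
proof (subst borel_measurable_euclidean_space, intro ballI)
  fix b :: "'b^'m" assume "b \<in> Basis"
  then obtain i u where b: "b = axis i u" by (auto simp: Basis_vec_def)
  show "(\<lambda>x. g x \<bullet> b) \<in> borel_measurable M"
    unfolding b inner_axis using assms[of i] by measurable
qed

lemma borel_measurable_column [measurable (raw)]:
  fixes f :: "'a \<Rightarrow> real^'d::finite^'n::finite"
  shows "f \<in> borel_measurable M \<Longrightarrow> (\<lambda>x. column k (f x)) \<in> borel_measurable M"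
  by (rule borel_measurable_vecI) (simp add: column_def)

lemma borel_measurable_matrix_matrix_mult [measurable (raw)]:
  fixes W :: "real^'n::finite^'m::finite" and f :: "'a \<Rightarrow> real^'d::finite^'n"
  shows "f \<in> borel_measurable M \<Longrightarrow> (\<lambda>x. W ** f x) \<in> borel_measurable M"
  by (intro borel_measurable_vecI) (simp add: matrix_matrix_mult_def)

lemma nn_integral_exp_neg_quadratic:
  fixes P :: "real^'n::finite^'n"
  assumes "pos_def_mat P"
  shows "(\<integral>\<^sup>+x. ennreal (exp (- (x \<bullet> (P *v x)) / 2)) \<partial>lborel)
     = ennreal ((2*pi) powr (real CARD('n) / 2) / sqrt (det P))"
proof -
  have "(\<integral>\<^sup>+x. ennreal (exp (- (x \<bullet> (P *v x)) / 2)) \<partial>lborel)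
      = (\<integral>\<^sup>+x. ennreal (exp (- (vec_lambda x \<bullet> (P *v vec_lambda x)) / 2)) \<partial>PiM UNIV (\<lambda>_::'n. lborel))"
    by (subst lborel_eq_distr_vec_lambda) (rule nn_integral_distr; simp)
  also have "\<dots> = (\<integral>\<^sup>+x. ennreal (exp (- quad_form UNIV P x / 2)) \<partial>PiM UNIV (\<lambda>_::'n. lborel))"
    by (simp add: inner_matrix_vector_mult_eq_quad_form vec_lambda_inverse)
  finally show ?thesis
    using gaussian_integral_pos_def_mat[OF assms] by simp
qed

lemma sets_mvnormal [simp, measurable_cong]: "sets (mvnormal R) = sets borel"
  by (simp add: mvnormal_def)

lemma prob_space_mvnormal:
  fixes R :: "real^'n::finite^'n"
  assumes R: "pos_def_mat R"
  shows "prob_space (mvnormal R)"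
proof
  define P where "P = matrix_inv R"
  define c where "c = (2*pi) powr (- real CARD('n) / 2) / sqrt (det R)"
  have P: "pos_def_mat P" unfolding P_def using R by (rule pos_def_mat_matrix_inv)
  have dets: "det R > 0" "det P > 0" "sqrt (det R) * sqrt (det P) = 1"
    using det_pos_if_pos_def_mat[OF R] det_pos_if_pos_def_mat[OF P] det_matrix_inv_mult[OF R]
    by (auto simp: P_def real_sqrt_mult[symmetric] mult.commute)
  then have c: "c \<ge> 0" by (simp add: c_def)
  have "emeasure (mvnormal R) (space (mvnormal R))
      = (\<integral>\<^sup>+x. ennreal (c * exp (- (x \<bullet> (P *v x)) / 2)) \<partial>lborel)"
    unfolding mvnormal_def P_def[symmetric] c_def[symmetric]
    by (subst emeasure_density) auto
  also have "\<dots> = (\<integral>\<^sup>+x. ennreal c * ennreal (exp (- (x \<bullet> (P *v x)) / 2)) \<partial>lborel)"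
    by (intro nn_integral_cong) (simp add: ennreal_mult c)
  also have "\<dots> = ennreal c * ennreal ((2*pi) powr (real CARD('n) / 2) / sqrt (det P))"
    unfolding nn_integral_exp_neg_quadratic[OF P, symmetric] by (rule nn_integral_cmult) simp
  also have "\<dots> = ennreal (c * ((2*pi) powr (real CARD('n) / 2) / sqrt (det P)))"
    using c dets by (subst ennreal_mult) auto
  also have "c * ((2*pi) powr (real CARD('n) / 2) / sqrt (det P)) = 1"
  proof -
    have "(2*pi) powr (- real CARD('n) / 2) * (2*pi) powr (real CARD('n) / 2) = 1"
      by (simp add: powr_add[symmetric])
    then show ?thesis unfolding c_def using dets by (simp add: field_simps)
  qed
  finally show "emeasure (mvnormal R) (space (mvnormal R)) = 1" by simp
qed

section \<open>Translating Gaussian noise\<close>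

text \<open>For \<open>P = R\<^sup>-\<^sup>1\<close>, this is the logarithm of the density ratio of \<open>N(b, R)\<close> to \<open>N(0, R)\<close> at \<open>x\<close>.\<close>
definition gaussian_log_ratio :: "real^'n::finite^'n \<Rightarrow> real^'n \<Rightarrow> real^'n \<Rightarrow> real" where
  "gaussian_log_ratio P b x = b \<bullet> (P *v x) - b \<bullet> (P *v b) / 2"

definition noise_log_ratio :: "real^'n::finite^'n \<Rightarrow> real^'d::finite^'n \<Rightarrow> real^'d^'n \<Rightarrow> real" where
  "noise_log_ratio P B V = (\<Sum>k\<in>UNIV. gaussian_log_ratio P (column k B) (column k V))"

definition mahalanobis_sq :: "real^'n::finite^'n \<Rightarrow> real^'d::finite^'n \<Rightarrow> real" where
  "mahalanobis_sq P B = (\<Sum>k\<in>UNIV. column k B \<bullet> (P *v column k B))"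

lemma borel_measurable_noise_log_ratio [measurable (raw)]:
  "f \<in> borel_measurable M \<Longrightarrow> g \<in> borel_measurable M
    \<Longrightarrow> (\<lambda>x. noise_log_ratio P (f x) (g x)) \<in> borel_measurable M"
  unfolding noise_log_ratio_def gaussian_log_ratio_def
  by (intro borel_measurable_sum borel_measurable_diff borel_measurable_inner borel_measurable_divide
      borel_measurable_const borel_measurable_column borel_measurable_matrix_vector_mult)

lemma nn_integral_mvnormal_shift:
  fixes R :: "real^'n::finite^'n"
  assumes R: "pos_def_mat R" and K [measurable]: "K \<in> borel_measurable borel"
  shows "(\<integral>\<^sup>+x. K (x + b) \<partial>mvnormal R)
     = (\<integral>\<^sup>+x. K x * ennreal (exp (gaussian_log_ratio (matrix_inv R) b x)) \<partial>mvnormal R)"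
proof -
  define P where "P = matrix_inv R"
  define p where "p x = (2*pi) powr (- real CARD('n) / 2) / sqrt (det R) * exp (- (x \<bullet> (P *v x)) / 2)" for x
  have p_nonneg: "p x \<ge> 0" for x using det_pos_if_pos_def_mat[OF R] by (simp add: p_def)
  have [measurable]: "p \<in> borel_measurable borel" unfolding p_def by measurable
  have mvnormal: "mvnormal R = density lborel (\<lambda>x. ennreal (p x))"
    by (simp add: mvnormal_def p_def P_def)
  have p_shift: "p (y - b) = p y * exp (gaussian_log_ratio P b y)" for y
  proof -
    have "b \<bullet> (P *v y) = y \<bullet> (P *v b)"
      using pos_def_mat_matrix_inv[OF R]
      by (metis P_def inner_commute pos_def_mat_def transpose_matrix_vector dot_lmul_matrix)
    then have "(y - b) \<bullet> (P *v (y - b)) = y \<bullet> (P *v y) - 2 * (b \<bullet> (P *v y)) + b \<bullet> (P *v b)"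
      by (simp add: matrix_vector_mult_diff_distrib inner_diff_left inner_diff_right)
    then show ?thesis
      by (simp add: p_def gaussian_log_ratio_def exp_add[symmetric] mult.assoc field_simps)
  qed
  have "(\<integral>\<^sup>+x. K (x + b) \<partial>mvnormal R) = (\<integral>\<^sup>+x. ennreal (p ((b + x) - b)) * K (b + x) \<partial>lborel)"
    unfolding mvnormal by (subst nn_integral_density) (simp_all add: add.commute)
  also have "\<dots> = (\<integral>\<^sup>+y. ennreal (p (y - b)) * K y \<partial>distr lborel borel ((+) b))"
    by (rule nn_integral_distr[symmetric]) measurable
  also have "\<dots> = (\<integral>\<^sup>+y. ennreal (p (y - b)) * K y \<partial>lborel)"
    by (simp add: lborel_distr_plus)
  also have "\<dots> = (\<integral>\<^sup>+y. ennreal (p y) * (K y * ennreal (exp (gaussian_log_ratio P b y))) \<partial>lborel)"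
    by (intro nn_integral_cong) (simp add: p_shift ennreal_mult p_nonneg mult_ac)
  also have "\<dots> = (\<integral>\<^sup>+y. K y * ennreal (exp (gaussian_log_ratio P b y)) \<partial>mvnormal R)"
    unfolding mvnormal by (rule nn_integral_density[symmetric]) (simp_all add: gaussian_log_ratio_def)
  finally show ?thesis by (simp add: P_def)
qed

lemma nn_integral_PiM_shift:
  fixes M :: "'i \<Rightarrow> 'a::ab_group_add measure" and c :: "'i \<Rightarrow> 'a"
  assumes "product_sigma_finite M" and "finite I"
    and "\<And>i g. i \<in> I \<Longrightarrow> g \<in> borel_measurable (M i) \<Longrightarrow>
      (\<integral>\<^sup>+y. g (y + c i) \<partial>M i) = (\<integral>\<^sup>+y. g y * e i y \<partial>M i)"
    and "\<And>i. i \<in> I \<Longrightarrow> e i \<in> borel_measurable (M i)"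
    and "\<And>i. i \<in> I \<Longrightarrow> (\<lambda>y. y + c i) \<in> M i \<rightarrow>\<^sub>M M i"
    and "G \<in> borel_measurable (PiM I M)"
  shows "(\<integral>\<^sup>+f. G (restrict (\<lambda>k. f k + c k) I) \<partial>PiM I M)
    = (\<integral>\<^sup>+f. G f * (\<Prod>k\<in>I. e k (f k)) \<partial>PiM I M)"
  using assms(2-)
proof (induction I arbitrary: G rule: finite_induct)
  case empty
  then show ?case by (simp add: PiM_empty restrict_def nn_integral_count_space_finite)
next
  case (insert i I)
  interpret product_sigma_finite M by (fact assms(1))
  note shift = insert.prems(1)
  have [measurable]: "e k \<in> borel_measurable (M k)" "(\<lambda>y. y + c k) \<in> M k \<rightarrow>\<^sub>M M k"
    if "k \<in> insert i I" for k using insert.prems(2,3) that by blast+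
  note G [measurable] = insert.prems(4)
  define G' where "G' z = (\<integral>\<^sup>+y. G (z(i := y)) * e i y \<partial>M i)" for z
  have [measurable]: "G' \<in> borel_measurable (PiM I M)"
    unfolding G'_def by measurable
  have "(\<integral>\<^sup>+f. G (restrict (\<lambda>k. f k + c k) (insert i I)) \<partial>PiM (insert i I) M)
      = (\<integral>\<^sup>+x. (\<integral>\<^sup>+y. G (restrict (\<lambda>k. (x(i := y)) k + c k) (insert i I)) \<partial>M i) \<partial>PiM I M)"
    by (rule product_nn_integral_insert) (use insert.hyps in auto)
  also have "\<dots> = (\<integral>\<^sup>+x. G' (restrict (\<lambda>k. x k + c k) I) \<partial>PiM I M)"
  proof (intro nn_integral_cong)
    fix x assume x: "x \<in> space (PiM I M)"
    define z where "z = restrict (\<lambda>k. x k + c k) I"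
    have z: "z \<in> space (PiM I M)"
      using x unfolding z_def
      by (auto simp: space_PiM PiE_iff intro: measurable_space[OF insert.prems(3)])
    have "restrict (\<lambda>k. (x(i := y)) k + c k) (insert i I) = z(i := y + c i)" for y
      using insert.hyps by (auto simp: z_def restrict_def fun_eq_iff)
    moreover have "(\<integral>\<^sup>+y. G (z(i := y + c i)) \<partial>M i) = G' z"
      unfolding G'_def by (rule shift) (use z in measurable)
    ultimately show "(\<integral>\<^sup>+y. G (restrict (\<lambda>k. (x(i := y)) k + c k) (insert i I)) \<partial>M i)
        = G' (restrict (\<lambda>k. x k + c k) I)"
      by (simp add: z_def)
  qed
  also have "\<dots> = (\<integral>\<^sup>+x. G' x * (\<Prod>k\<in>I. e k (x k)) \<partial>PiM I M)"
    by (rule insert.IH) (use insert.prems in auto)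
  also have "\<dots> = (\<integral>\<^sup>+x. (\<integral>\<^sup>+y. G (x(i := y)) * (\<Prod>k\<in>insert i I. e k ((x(i := y)) k)) \<partial>M i)
      \<partial>PiM I M)"
  proof (intro nn_integral_cong)
    fix x assume x: "x \<in> space (PiM I M)"
    have "(\<Prod>k\<in>I. e k ((x(i := y)) k)) = (\<Prod>k\<in>I. e k (x k))" for y
      using insert.hyps by (intro prod.cong) auto
    then have "(\<Prod>k\<in>insert i I. e k ((x(i := y)) k)) = e i y * (\<Prod>k\<in>I. e k (x k))" for y
      using insert.hyps by simp
    then show "G' x * (\<Prod>k\<in>I. e k (x k))
        = (\<integral>\<^sup>+y. G (x(i := y)) * (\<Prod>k\<in>insert i I. e k ((x(i := y)) k)) \<partial>M i)"
      unfolding G'_def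
      by (subst nn_integral_multc[symmetric]) (use x in \<open>measurable, simp add: mult.assoc\<close>)
  qed
  also have "\<dots> = (\<integral>\<^sup>+f. G f * (\<Prod>k\<in>insert i I. e k (f k)) \<partial>PiM (insert i I) M)"
    by (rule product_nn_integral_insert[symmetric]) (use insert.hyps in auto)
  finally show ?case .
qed

lemma sets_noise_dist [simp, measurable_cong]: "sets (noise_dist R) = sets borel"
  by (simp add: noise_dist_def)

lemma borel_measurable_columns_to_matrix [measurable]:
  "(\<lambda>f. \<chi> i. \<chi> k. f k $ i :: real^'d::finite^'n::finite)
    \<in> borel_measurable (PiM UNIV (\<lambda>_::'d. mvnormal (R :: real^'n^'n)))"
proof (intro borel_measurable_vecI)
  fix i k
  have "(\<lambda>f. f k) \<in> borel_measurable (PiM UNIV (\<lambda>_::'d. mvnormal R))"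
    using measurable_component_singleton[of k UNIV "\<lambda>_. mvnormal R"]
    by (simp cong: measurable_cong_sets)
  then show "(\<lambda>f. (\<chi> i. \<chi> k. f k $ i) $ i $ k) \<in> borel_measurable (PiM UNIV (\<lambda>_::'d. mvnormal R))"
    by simp
qed

lemma prob_space_noise_dist: "pos_def_mat R \<Longrightarrow> prob_space (noise_dist R)"
  unfolding noise_dist_def
  by (intro prob_space.prob_space_distr prob_space_PiM prob_space_mvnormal) simp_all

text \<open>The columns of the noise matrix are independent \<open>N(0, R)\<close>, so the one-column shift
  formula multiplies up over the columns.\<close>
lemma nn_integral_noise_dist_shift:
  fixes R :: "real^'n::finite^'n" and B :: "real^'d::finite^'n"
  assumes R: "pos_def_mat R" and K [measurable]: "K \<in> borel_measurable borel"
  shows "(\<integral>\<^sup>+V. K (V + B) \<partial>noise_dist R)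
     = (\<integral>\<^sup>+V. K V * ennreal (exp (noise_log_ratio (matrix_inv R) B V)) \<partial>noise_dist R)"
proof -
  define P where "P = matrix_inv R"
  let ?mat = "\<lambda>f. \<chi> i. \<chi> k. f k $ i :: real^'d^'n"
  let ?M = "PiM UNIV (\<lambda>_::'d. mvnormal R)"
  interpret product_sigma_finite "\<lambda>_::'d. mvnormal R"
    by (simp add: product_sigma_finite_def prob_space_imp_sigma_finite prob_space_mvnormal[OF R])
  have column_mat: "column k (?mat f) = f k" for f k
    by (simp add: column_def vec_eq_iff)
  have "(\<integral>\<^sup>+V. K (V + B) \<partial>noise_dist R) = (\<integral>\<^sup>+f. K (?mat f + B) \<partial>?M)"
    unfolding noise_dist_def by (rule nn_integral_distr) measurable
  also have "\<dots> = (\<integral>\<^sup>+f. K (?mat (restrict (\<lambda>k. f k + column k B) UNIV)) \<partial>?M)"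
    by (intro nn_integral_cong arg_cong[where f=K]) (simp add: vec_eq_iff column_def)
  also have "\<dots> = (\<integral>\<^sup>+f. K (?mat f) * (\<Prod>k\<in>UNIV. ennreal (exp (gaussian_log_ratio P (column k B) (f k)))) \<partial>?M)"
  proof (rule nn_integral_PiM_shift)
    fix k :: 'd and g :: "real^'n \<Rightarrow> ennreal"
    assume "g \<in> borel_measurable (mvnormal R)"
    then have [measurable]: "g \<in> borel_measurable borel" by (simp cong: measurable_cong_sets)
    show "(\<integral>\<^sup>+y. g (y + column k B) \<partial>mvnormal R)
        = (\<integral>\<^sup>+y. g y * ennreal (exp (gaussian_log_ratio P (column k B) y)) \<partial>mvnormal R)"
      unfolding P_def by (rule nn_integral_mvnormal_shift[OF R]) measurable
  qed (simp_all add: gaussian_log_ratio_def product_sigma_finite_axioms cong: measurable_cong_sets)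
  also have "\<dots> = (\<integral>\<^sup>+f. K (?mat f) * ennreal (exp (noise_log_ratio P B (?mat f))) \<partial>?M)"
    by (simp add: noise_log_ratio_def column_mat exp_sum prod_ennreal)
  also have "\<dots> = (\<integral>\<^sup>+V. K V * ennreal (exp (noise_log_ratio P B V)) \<partial>noise_dist R)"
    unfolding noise_dist_def by (rule nn_integral_distr[symmetric]) measurable
  finally show ?thesis by (simp add: P_def)
qed

text \<open>Completing the square, \<open>\<mu> \<cdot> noise_log_ratio P B = noise_log_ratio P (\<mu> B) + (\<mu>\<^sup>2 - \<mu>) \<cdot>
  mahalanobis_sq P B / 2\<close>, and \<open>exp (noise_log_ratio P (\<mu> B))\<close> integrates to \<open>1\<close> by the shift formula.\<close>
lemma nn_integral_exp_noise_log_ratio: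
  fixes R :: "real^'n::finite^'n" and B :: "real^'d::finite^'n"
  assumes R: "pos_def_mat R"
  shows "(\<integral>\<^sup>+V. ennreal (exp (\<mu> * noise_log_ratio (matrix_inv R) B V)) \<partial>noise_dist R)
       = ennreal (exp ((\<mu>\<^sup>2 - \<mu>) * mahalanobis_sq (matrix_inv R) B / 2))"
proof -
  define P where "P = matrix_inv R"
  define c where "c = (\<mu>\<^sup>2 - \<mu>) * mahalanobis_sq P B / 2"
  interpret prob_space "noise_dist R :: (real^'d^'n) measure"
    by (rule prob_space_noise_dist[OF R])
  have column_scale: "column k (\<mu> *\<^sub>R B) = \<mu> *\<^sub>R column k B" for k
    by (simp add: column_def vec_eq_iff)
  have linear_part: "noise_log_ratio P B' V
      = (\<Sum>k\<in>UNIV. column k B' \<bullet> (P *v column k V)) - mahalanobis_sq P B' / 2" for B' V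
    by (simp add: noise_log_ratio_def gaussian_log_ratio_def mahalanobis_sq_def sum_subtractf
        sum_divide_distrib)
  have "mahalanobis_sq P (\<mu> *\<^sub>R B) = \<mu>\<^sup>2 * mahalanobis_sq P B"
    by (simp add: mahalanobis_sq_def column_scale matrix_vector_mult_scaleR sum_distrib_left
        power2_eq_square mult.assoc)
  then have square: "\<mu> * noise_log_ratio P B V = noise_log_ratio P (\<mu> *\<^sub>R B) V + c" for V
    unfolding linear_part c_def
    by (simp add: column_scale sum_distrib_left field_simps power2_eq_square)
  have "(\<integral>\<^sup>+V. ennreal (exp (noise_log_ratio P (\<mu> *\<^sub>R B) V)) \<partial>noise_dist R) = 1"
    using nn_integral_noise_dist_shift[OF R, of "\<lambda>_. 1" "\<mu> *\<^sub>R B"]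
    by (simp add: P_def emeasure_space_1)
  then have "(\<integral>\<^sup>+V. ennreal (exp (noise_log_ratio P (\<mu> *\<^sub>R B) V)) * ennreal (exp c) \<partial>noise_dist R)
      = ennreal (exp c)"
    by (subst nn_integral_multc) simp_all
  moreover have "(\<integral>\<^sup>+V. ennreal (exp (\<mu> * noise_log_ratio P B V)) \<partial>noise_dist R)
      = (\<integral>\<^sup>+V. ennreal (exp (noise_log_ratio P (\<mu> *\<^sub>R B) V)) * ennreal (exp c) \<partial>noise_dist R)"
    by (intro nn_integral_cong) (simp add: square exp_add ennreal_mult)
  ultimately show ?thesis
    by (simp add: P_def c_def)
qed

section \<open>Noisy iterations and their privacy loss\<close>

primrec perturbed_traj ::
  "(nat \<Rightarrow> real^'d::finite^'n::finite \<Rightarrow> real^'d^'n) \<Rightarrow> real^'n^'n \<Rightarrow> (nat \<Rightarrow> real)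
   \<Rightarrow> real^'d^'n \<Rightarrow> (nat \<Rightarrow> real^'d^'n) \<Rightarrow> nat \<Rightarrow> real^'d^'n" where
  "perturbed_traj g W \<eta> x0 V 0 = x0"
| "perturbed_traj g W \<eta> x0 V (Suc t) =
     W ** (perturbed_traj g W \<eta> x0 V t - \<eta> t *\<^sub>R (g t (perturbed_traj g W \<eta> x0 V t) + V t))"

definition traj_step ::
  "(nat \<Rightarrow> real^'d::finite^'n::finite \<Rightarrow> real^'d^'n) \<Rightarrow> real^'n^'n \<Rightarrow> (nat \<Rightarrow> real) \<Rightarrow> nat
   \<Rightarrow> (nat \<Rightarrow> real^'d^'n) \<Rightarrow> real^'d^'n \<Rightarrow> nat \<Rightarrow> real^'d^'n" where
  "traj_step g W \<eta> t z y = z(Suc t := W ** (z t - \<eta> t *\<^sub>R (g t (z t) + y)))"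

text \<open>The privacy loss of the whole run, evaluated along the trajectory driven by \<open>g2\<close>.\<close>
definition traj_log_ratio ::
  "real^'n::finite^'n \<Rightarrow> (nat \<Rightarrow> real^'d::finite^'n \<Rightarrow> real^'d^'n) \<Rightarrow> (nat \<Rightarrow> real^'d^'n \<Rightarrow> real^'d^'n)
   \<Rightarrow> real^'n^'n \<Rightarrow> (nat \<Rightarrow> real) \<Rightarrow> real^'d^'n \<Rightarrow> nat \<Rightarrow> (nat \<Rightarrow> real^'d^'n) \<Rightarrow> real" where
  "traj_log_ratio P g1 g2 W \<eta> x0 T V =
     (\<Sum>t<T. let X = perturbed_traj g2 W \<eta> x0 V t in noise_log_ratio P (g1 t X - g2 t X) (V t))"

lemma perturbed_traj_cong:
  "(\<And>s. s < t \<Longrightarrow> V s = V' s) \<Longrightarrow> perturbed_traj g W \<eta> x0 V t = perturbed_traj g W \<eta> x0 V' t"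
  by (induction t) auto

lemma restrict_perturbed_traj_fun_upd:
  "restrict (perturbed_traj g W \<eta> x0 (V(t := y))) {..Suc t}
    = traj_step g W \<eta> t (restrict (perturbed_traj g W \<eta> x0 V) {..t}) y"
proof
  fix s
  have "perturbed_traj g W \<eta> x0 (V(t := y)) r = perturbed_traj g W \<eta> x0 V r" if "r \<le> t" for r
    by (rule perturbed_traj_cong) (use that in auto)
  then show "restrict (perturbed_traj g W \<eta> x0 (V(t := y))) {..Suc t} s
      = traj_step g W \<eta> t (restrict (perturbed_traj g W \<eta> x0 V) {..t}) y s"
    by (cases "s \<le> t"; cases "s = Suc t") (auto simp: traj_step_def)
qed

lemma traj_log_ratio_fun_upd:
  "traj_log_ratio P g1 g2 W \<eta> x0 (Suc t) (V(t := y)) = traj_log_ratio P g1 g2 W \<eta> x0 t V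
    + (let X = perturbed_traj g2 W \<eta> x0 V t in noise_log_ratio P (g1 t X - g2 t X) y)"
proof -
  have "perturbed_traj g2 W \<eta> x0 (V(t := y)) s = perturbed_traj g2 W \<eta> x0 V s" if "s \<le> t" for s
    by (rule perturbed_traj_cong) (use that in auto)
  then show ?thesis
    by (simp add: traj_log_ratio_def)
qed

lemma borel_measurable_noise_seq_nth:
  "t < T \<Longrightarrow> (\<lambda>V. V t) \<in> borel_measurable (PiM {..<T} (\<lambda>_. noise_dist R))"
  using measurable_component_singleton[of t "{..<T}" "\<lambda>_. noise_dist R"]
  by (simp cong: measurable_cong_sets)

lemma borel_measurable_perturbed_traj:
  assumes [measurable]: "\<And>t. g t \<in> borel_measurable borel"
  shows "t \<le> T \<Longrightarrow> (\<lambda>V. perturbed_traj g W \<eta> x0 V t) \<in> borel_measurable (PiM {..<T} (\<lambda>_. noise_dist R))"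
proof (induction t)
  case (Suc t)
  note [measurable] = borel_measurable_noise_seq_nth[of t T R] Suc
  show ?case using Suc.prems by simp
qed simp

lemma measurable_restrict_perturbed_traj:
  assumes "\<And>t. g t \<in> borel_measurable borel"
  shows "(\<lambda>V. restrict (perturbed_traj g W \<eta> x0 V) {..T})
    \<in> PiM {..<T} (\<lambda>_. noise_dist R) \<rightarrow>\<^sub>M PiM {..T} (\<lambda>_. borel)"
  by (rule measurable_restrict) (use borel_measurable_perturbed_traj[OF assms] in auto)

lemma borel_measurable_traj_log_ratio [measurable]:
  assumes "\<And>t. g1 t \<in> borel_measurable borel" and "\<And>t. g2 t \<in> borel_measurable borel"
  shows "traj_log_ratio P g1 g2 W \<eta> x0 T \<in> borel_measurable (PiM {..<T} (\<lambda>_. noise_dist R))"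
  unfolding traj_log_ratio_def Let_def
proof (rule borel_measurable_sum)
  fix t assume "t \<in> {..<T}"
  then have "t < T" "t \<le> T" by auto
  note [measurable] = assms borel_measurable_noise_seq_nth[OF \<open>t < T\<close>]
    borel_measurable_perturbed_traj[OF assms(2) \<open>t \<le> T\<close>]
  show "(\<lambda>V. noise_log_ratio P (g1 t (perturbed_traj g2 W \<eta> x0 V t) - g2 t (perturbed_traj g2 W \<eta> x0 V t)) (V t))
      \<in> borel_measurable (PiM {..<T} (\<lambda>_. noise_dist R))"
    by measurable
qed

lemma measurable_traj_step [measurable]:
  fixes g :: "nat \<Rightarrow> real^'d::finite^'n::finite \<Rightarrow> real^'d^'n"
  assumes [measurable]: "g t \<in> borel_measurable borel"
  shows "(\<lambda>(z, y). traj_step g W \<eta> t z y)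
     \<in> PiM {..t} (\<lambda>_. borel) \<Otimes>\<^sub>M noise_dist R \<rightarrow>\<^sub>M PiM {..Suc t} (\<lambda>_. borel)"
proof -
  have [measurable]: "(\<lambda>z. z t) \<in> PiM {..t} (\<lambda>_. borel :: (real^'d^'n) measure) \<rightarrow>\<^sub>M borel"
    by simp
  have "(\<lambda>(z, y). (z, W ** (z t - \<eta> t *\<^sub>R (g t (z t) + y))))
     \<in> PiM {..t} (\<lambda>_. borel) \<Otimes>\<^sub>M noise_dist R \<rightarrow>\<^sub>M PiM {..t} (\<lambda>_. borel) \<Otimes>\<^sub>M (borel :: (real^'d^'n) measure)"
    by measurable
  moreover have "(\<lambda>(z, y). z(Suc t := y)) \<in> PiM {..t} (\<lambda>_. borel) \<Otimes>\<^sub>M (borel :: (real^'d^'n) measure)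
      \<rightarrow>\<^sub>M PiM (insert (Suc t) {..t}) (\<lambda>_. borel)"
    by (rule measurable_add_dim)
  moreover have "insert (Suc t) {..t} = {..Suc t}" by auto
  ultimately show ?thesis
    unfolding traj_step_def by (auto dest: measurable_comp simp: comp_def case_prod_beta)
qed

lemma traj_step_shift:
  "traj_step g1 W \<eta> t z y = traj_step g2 W \<eta> t z (y + (g1 t (z t) - g2 t (z t)))"
  by (simp add: traj_step_def algebra_simps)

lemma nn_integral_noise_seq_Suc:
  fixes R :: "real^'n::finite^'n" and F :: "(nat \<Rightarrow> real^'d::finite^'n) \<Rightarrow> ennreal"
  assumes R: "pos_def_mat R" and F: "F \<in> borel_measurable (PiM {..<Suc T} (\<lambda>_. noise_dist R))"
  shows "(\<integral>\<^sup>+V. F V \<partial>PiM {..<Suc T} (\<lambda>_. noise_dist R))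
    = (\<integral>\<^sup>+V. (\<integral>\<^sup>+y. F (V(T := y)) \<partial>noise_dist R) \<partial>PiM {..<T} (\<lambda>_. noise_dist R))"
proof -
  interpret noise: prob_space "noise_dist R :: (real^'d^'n) measure"
    by (rule prob_space_noise_dist[OF R])
  interpret product_sigma_finite "\<lambda>_::nat. noise_dist R :: (real^'d^'n) measure"
    by (simp add: product_sigma_finite_def noise.sigma_finite_measure_axioms)
  have "T \<notin> {..<T}" by simp
  from product_nn_integral_insert[OF finite_lessThan this F[unfolded lessThan_Suc]]
  show ?thesis unfolding lessThan_Suc .
qed

lemma measurable_traj_step_Pair:
  assumes "z \<in> space (PiM {..t} (\<lambda>_. borel))" and "g t \<in> borel_measurable borel"
  shows "traj_step g W \<eta> t z \<in> noise_dist R \<rightarrow>\<^sub>M PiM {..Suc t} (\<lambda>_. borel)"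
  using measurable_compose_Pair1[OF assms(1) measurable_traj_step[where g=g and t=t, OF assms(2)]]
  by (simp only: case_prod_conv)

lemma nn_integral_traj_step_change:
  fixes R :: "real^'n::finite^'n" and g1 g2 :: "nat \<Rightarrow> real^'d::finite^'n \<Rightarrow> real^'d^'n"
  assumes R: "pos_def_mat R" and g2: "g2 t \<in> borel_measurable borel"
    and H: "H \<in> borel_measurable (PiM {..Suc t} (\<lambda>_. borel))"
    and z: "z \<in> space (PiM {..t} (\<lambda>_. borel))"
  shows "(\<integral>\<^sup>+y. H (traj_step g1 W \<eta> t z y) \<partial>noise_dist R)
    = (\<integral>\<^sup>+y. H (traj_step g2 W \<eta> t z y)
        * ennreal (exp (noise_log_ratio (matrix_inv R) (g1 t (z t) - g2 t (z t)) y)) \<partial>noise_dist R)"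
  unfolding traj_step_shift[where ?g1.0=g1 and ?g2.0=g2]
proof (rule nn_integral_noise_dist_shift[OF R])
  have "(\<lambda>y. H (traj_step g2 W \<eta> t z y)) \<in> borel_measurable (noise_dist R)"
    using measurable_traj_step_Pair[where g=g2, OF z g2] H by (rule measurable_compose)
  then show "(\<lambda>y. H (traj_step g2 W \<eta> t z y)) \<in> borel_measurable borel"
    by (simp cong: measurable_cong_sets)
qed

lemma borel_measurable_nn_integral_traj_step:
  fixes R :: "real^'n::finite^'n" and g1 g2 :: "nat \<Rightarrow> real^'d::finite^'n \<Rightarrow> real^'d^'n"
  assumes R: "pos_def_mat R" and [measurable]: "g1 t \<in> borel_measurable borel"
    and g2: "g2 t \<in> borel_measurable borel" and H: "H \<in> borel_measurable (PiM {..Suc t} (\<lambda>_. borel))"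
  shows "(\<lambda>z. \<integral>\<^sup>+y. H (traj_step g2 W \<eta> t z y)
      * ennreal (exp (noise_log_ratio P (g1 t (z t) - g2 t (z t)) y)) \<partial>noise_dist R)
    \<in> borel_measurable (PiM {..t} (\<lambda>_. borel))"
proof -
  interpret noise: prob_space "noise_dist R :: (real^'d^'n) measure"
    by (rule prob_space_noise_dist[OF R])
  have [measurable]: "g2 t \<in> borel_measurable borel"
    "(\<lambda>z. z t) \<in> PiM {..t} (\<lambda>_. borel :: (real^'d^'n) measure) \<rightarrow>\<^sub>M borel"
    "(\<lambda>y::real^'d^'n. y) \<in> noise_dist R \<rightarrow>\<^sub>M borel"
    by (simp_all add: g2 cong: measurable_cong_sets)
  have "(\<lambda>p. H (traj_step g2 W \<eta> t (fst p) (snd p)))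
      \<in> borel_measurable (PiM {..t} (\<lambda>_. borel) \<Otimes>\<^sub>M noise_dist R)"
    using measurable_compose[OF measurable_traj_step[where g=g2 and t=t, OF g2] H] by (simp add: case_prod_beta)
  moreover have "(\<lambda>p. ennreal (exp (noise_log_ratio P (g1 t (fst p t) - g2 t (fst p t)) (snd p))))
      \<in> borel_measurable (PiM {..t} (\<lambda>_. borel) \<Otimes>\<^sub>M noise_dist R)"
    by measurable
  ultimately show ?thesis
    by (intro noise.borel_measurable_nn_integral) (simp add: case_prod_beta)
qed

text \<open>Change of measure along the whole run: each step is a Gaussian shift, so the
  likelihood ratios of the individual steps multiply up.\<close>
lemma nn_integral_perturbed_traj_change:
  fixes R :: "real^'n::finite^'n" and g1 g2 :: "nat \<Rightarrow> real^'d::finite^'n \<Rightarrow> real^'d^'n"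
  assumes R: "pos_def_mat R"
    and g1: "\<And>t. g1 t \<in> borel_measurable borel" and g2: "\<And>t. g2 t \<in> borel_measurable borel"
  shows "H \<in> borel_measurable (PiM {..T} (\<lambda>_. borel)) \<Longrightarrow>
    (\<integral>\<^sup>+V. H (restrict (perturbed_traj g1 W \<eta> x0 V) {..T}) \<partial>PiM {..<T} (\<lambda>_. noise_dist R))
    = (\<integral>\<^sup>+V. H (restrict (perturbed_traj g2 W \<eta> x0 V) {..T})
        * ennreal (exp (traj_log_ratio (matrix_inv R) g1 g2 W \<eta> x0 T V)) \<partial>PiM {..<T} (\<lambda>_. noise_dist R))"
proof (induction T arbitrary: H)
  case 0
  have "restrict (perturbed_traj g1 W \<eta> x0 V) {..0} = restrict (perturbed_traj g2 W \<eta> x0 V) {..0}" for V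
    by (auto simp: restrict_def fun_eq_iff)
  then show ?case by (simp add: traj_log_ratio_def)
next
  case (Suc T)
  define P where "P = matrix_inv R"
  let ?N = "\<lambda>T. PiM {..<T} (\<lambda>_. noise_dist R)"
  let ?X1 = "\<lambda>T V. restrict (perturbed_traj g1 W \<eta> x0 V) {..T}"
  let ?X2 = "\<lambda>T V. restrict (perturbed_traj g2 W \<eta> x0 V) {..T}"
  let ?L = "traj_log_ratio P g1 g2 W \<eta> x0"
  define J where "J z = (\<integral>\<^sup>+y. H (traj_step g2 W \<eta> T z y)
      * ennreal (exp (noise_log_ratio P (g1 T (z T) - g2 T (z T)) y)) \<partial>noise_dist R)" for z
  note H [measurable] = Suc.prems
  note [measurable] = measurable_restrict_perturbed_traj[OF g1] measurable_restrict_perturbed_traj[OF g2]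
    borel_measurable_traj_log_ratio[OF g1 g2]
  have X: "?X1 T V \<in> space (PiM {..T} (\<lambda>_. borel))" "?X2 T V \<in> space (PiM {..T} (\<lambda>_. borel))" for V
    by (simp_all add: space_PiM)
  have step_measurable: "(\<lambda>y. H (traj_step g2 W \<eta> T (?X2 T V) y)
      * ennreal (exp (noise_log_ratio P B y))) \<in> borel_measurable (noise_dist R)" for V B
  proof -
    note [measurable] = measurable_compose[OF measurable_traj_step_Pair[where g=g2, OF X(2) g2] H]
    show ?thesis by measurable
  qed
  have "(\<integral>\<^sup>+V. H (?X1 (Suc T) V) \<partial>?N (Suc T))
      = (\<integral>\<^sup>+V. (\<integral>\<^sup>+y. H (traj_step g1 W \<eta> T (?X1 T V) y) \<partial>noise_dist R) \<partial>?N T)"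
    unfolding restrict_perturbed_traj_fun_upd[symmetric]
    by (rule nn_integral_noise_seq_Suc[OF R]) measurable
  also have "\<dots> = (\<integral>\<^sup>+V. J (?X1 T V) \<partial>?N T)"
    unfolding J_def P_def by (intro nn_integral_cong nn_integral_traj_step_change[where ?g2.0=g2 and t=T, OF R g2 H X(1)])
  also have "\<dots> = (\<integral>\<^sup>+V. J (?X2 T V) * ennreal (exp (?L T V)) \<partial>?N T)"
    unfolding P_def J_def
    by (rule Suc.IH) (rule borel_measurable_nn_integral_traj_step[where ?g1.0=g1 and ?g2.0=g2 and t=T, OF R g1 g2 H])
  also have "\<dots> = (\<integral>\<^sup>+V. (\<integral>\<^sup>+y. H (?X2 (Suc T) (V(T := y))) * ennreal (exp (?L (Suc T) (V(T := y))))
       \<partial>noise_dist R) \<partial>?N T)"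
    unfolding J_def restrict_perturbed_traj_fun_upd traj_log_ratio_fun_upd
    by (intro nn_integral_cong, subst nn_integral_multc[symmetric])
      (simp_all add: step_measurable Let_def exp_add ennreal_mult mult_ac)
  also have "\<dots> = (\<integral>\<^sup>+V. H (?X2 (Suc T) V) * ennreal (exp (?L (Suc T) V)) \<partial>?N (Suc T))"
    by (rule nn_integral_noise_seq_Suc[OF R, symmetric]) measurable
  finally show ?case by (simp only: P_def)
qed

lemma nn_integral_exp_traj_log_ratio_le:
  fixes R :: "real^'n::finite^'n" and g1 g2 :: "nat \<Rightarrow> real^'d::finite^'n \<Rightarrow> real^'d^'n"
  assumes R: "pos_def_mat R"
    and g1 [measurable]: "\<And>t. g1 t \<in> borel_measurable borel"
    and g2 [measurable]: "\<And>t. g2 t \<in> borel_measurable borel"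
    and \<mu>: "\<mu>\<^sup>2 - \<mu> \<ge> 0"
    and sensitivity: "\<And>t X. mahalanobis_sq (matrix_inv R) (g1 t X - g2 t X) \<le> \<beta>"
  shows "(\<integral>\<^sup>+V. ennreal (exp (\<mu> * traj_log_ratio (matrix_inv R) g1 g2 W \<eta> x0 T V)) \<partial>PiM {..<T} (\<lambda>_. noise_dist R))
     \<le> ennreal (exp ((\<mu>\<^sup>2 - \<mu>) * \<beta> / 2 * real T))"
proof (induction T)
  case 0
  show ?case by (simp add: traj_log_ratio_def PiM_empty nn_integral_count_space_finite)
next
  case (Suc T)
  define P where "P = matrix_inv R"
  define c where "c = (\<mu>\<^sup>2 - \<mu>) * \<beta> / 2"
  let ?N = "\<lambda>T. PiM {..<T} (\<lambda>_. noise_dist R)"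
  let ?L = "traj_log_ratio P g1 g2 W \<eta> x0"
  let ?B = "\<lambda>V. let X = perturbed_traj g2 W \<eta> x0 V T in g1 T X - g2 T X"
  note [measurable] = borel_measurable_traj_log_ratio[OF g1 g2]
  have step: "exp ((\<mu>\<^sup>2 - \<mu>) * mahalanobis_sq P (?B V) / 2) \<le> exp c" for V
    using mult_left_mono[OF sensitivity \<mu>] unfolding c_def P_def Let_def by simp
  have "(\<integral>\<^sup>+V. ennreal (exp (\<mu> * ?L (Suc T) V)) \<partial>?N (Suc T))
      = (\<integral>\<^sup>+V. (\<integral>\<^sup>+y. ennreal (exp (\<mu> * ?L (Suc T) (V(T := y)))) \<partial>noise_dist R) \<partial>?N T)"
    by (rule nn_integral_noise_seq_Suc[OF R]) measurable
  also have "\<dots> = (\<integral>\<^sup>+V. ennreal (exp (\<mu> * ?L T V))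
      * ennreal (exp ((\<mu>\<^sup>2 - \<mu>) * mahalanobis_sq P (?B V) / 2)) \<partial>?N T)"
  proof (intro nn_integral_cong)
    fix V
    have "(\<integral>\<^sup>+y. ennreal (exp (\<mu> * ?L (Suc T) (V(T := y)))) \<partial>noise_dist R)
        = (\<integral>\<^sup>+y. ennreal (exp (\<mu> * ?L T V)) * ennreal (exp (\<mu> * noise_log_ratio P (?B V) y)) \<partial>noise_dist R)"
      unfolding traj_log_ratio_fun_upd by (intro nn_integral_cong) (simp add: Let_def distrib_left exp_add ennreal_mult)
    also have "\<dots> = ennreal (exp (\<mu> * ?L T V)) * (\<integral>\<^sup>+y. ennreal (exp (\<mu> * noise_log_ratio P (?B V) y)) \<partial>noise_dist R)"
      by (rule nn_integral_cmult) measurable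
    also have "\<dots> = ennreal (exp (\<mu> * ?L T V)) * ennreal (exp ((\<mu>\<^sup>2 - \<mu>) * mahalanobis_sq P (?B V) / 2))"
      unfolding P_def nn_integral_exp_noise_log_ratio[OF R] ..
    finally show "(\<integral>\<^sup>+y. ennreal (exp (\<mu> * ?L (Suc T) (V(T := y)))) \<partial>noise_dist R)
        = ennreal (exp (\<mu> * ?L T V)) * ennreal (exp ((\<mu>\<^sup>2 - \<mu>) * mahalanobis_sq P (?B V) / 2))" .
  qed
  also have "\<dots> \<le> (\<integral>\<^sup>+V. ennreal (exp (\<mu> * ?L T V)) * ennreal (exp c) \<partial>?N T)"
    using step by (intro nn_integral_mono mult_left_mono ennreal_leI) auto
  also have "\<dots> = (\<integral>\<^sup>+V. ennreal (exp (\<mu> * ?L T V)) \<partial>?N T) * ennreal (exp c)"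
    by (rule nn_integral_multc) measurable
  also have "\<dots> \<le> ennreal (exp (c * real T)) * ennreal (exp c)"
    using Suc.IH unfolding c_def P_def by (intro mult_right_mono) auto
  also have "\<dots> = ennreal (exp (c * real (Suc T)))"
    by (simp add: ennreal_mult[symmetric] exp_add[symmetric] distrib_left)
  finally show ?case by (simp add: c_def P_def)
qed

text \<open>The conversion of Bun and Steinke from \<open>\<rho>\<close>-zero-concentrated differential privacy to
  \<open>(\<epsilon>, \<delta>)\<close>-differential privacy: Markov's inequality for \<open>exp (l L)\<close> with the optimal
  \<open>l = sqrt (ln (1 / \<delta>) / \<rho>)\<close>.\<close>
lemma zcdp_privacy_loss_tail:
  fixes L :: "'a \<Rightarrow> real"
  assumes [measurable]: "L \<in> borel_measurable N"
    and \<rho>: "\<rho> > 0" and \<delta>: "0 < \<delta>" "\<delta> < 1"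
    and zcdp: "\<And>l. l \<ge> 0 \<Longrightarrow> (\<integral>\<^sup>+x. ennreal (exp ((1 + l) * L x)) \<partial>N) \<le> ennreal (exp (l * (1 + l) * \<rho>))"
  defines "\<epsilon> \<equiv> \<rho> + 2 * sqrt (\<rho> * ln (1 / \<delta>))"
  shows "(\<integral>\<^sup>+x. indicator {x. L x > \<epsilon>} x * ennreal (exp (L x)) \<partial>N) \<le> ennreal \<delta>"
proof -
  define l where "l = sqrt (ln (1 / \<delta>) / \<rho>)"
  have ln: "ln (1 / \<delta>) > 0" using \<delta> by (intro ln_gt_zero) (simp add: field_simps)
  then have l: "l \<ge> 0" using \<rho> by (simp add: l_def)
  have exponent: "- l * \<epsilon> + l * (1 + l) * \<rho> = ln \<delta>"
  proof -
    have "l * l * \<rho> = ln (1 / \<delta>)" using \<rho> ln by (simp add: l_def)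
    moreover have "l * sqrt (\<rho> * ln (1 / \<delta>)) = ln (1 / \<delta>)"
      using \<rho> ln by (simp add: l_def real_sqrt_mult[symmetric])
    ultimately show ?thesis using \<delta> by (simp add: \<epsilon>_def algebra_simps ln_div)
  qed
  have "(\<integral>\<^sup>+x. indicator {x. L x > \<epsilon>} x * ennreal (exp (L x)) \<partial>N)
      \<le> (\<integral>\<^sup>+x. ennreal (exp (- l * \<epsilon>)) * ennreal (exp ((1 + l) * L x)) \<partial>N)"
  proof (intro nn_integral_mono)
    fix x
    show "indicator {x. L x > \<epsilon>} x * ennreal (exp (L x))
        \<le> ennreal (exp (- l * \<epsilon>)) * ennreal (exp ((1 + l) * L x))"
    proof (cases "L x > \<epsilon>")
      case True
      then have "l * \<epsilon> \<le> l * L x" using l by (intro mult_left_mono) auto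
      then have "exp (L x) \<le> exp (- l * \<epsilon>) * exp ((1 + l) * L x)"
        by (simp add: exp_add[symmetric] algebra_simps)
      then show ?thesis using True by (simp add: ennreal_mult[symmetric] ennreal_leI)
    qed simp
  qed
  also have "\<dots> = ennreal (exp (- l * \<epsilon>)) * (\<integral>\<^sup>+x. ennreal (exp ((1 + l) * L x)) \<partial>N)"
    by (rule nn_integral_cmult) measurable
  also have "\<dots> \<le> ennreal (exp (- l * \<epsilon>)) * ennreal (exp (l * (1 + l) * \<rho>))"
    using zcdp[OF l] by (rule mult_left_mono) simp
  also have "\<dots> = ennreal \<delta>"
  proof -
    have "exp (- l * \<epsilon>) * exp (l * (1 + l) * \<rho>) = \<delta>"
      unfolding exp_add[symmetric] exponent using \<delta> by simp
    then show ?thesis by (simp only: ennreal_mult[symmetric] exp_ge_zero)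
  qed
  finally show ?thesis .
qed

lemma emeasure_le_of_likelihood_ratio:
  assumes Y1 [measurable]: "Y1 \<in> N \<rightarrow>\<^sub>M M" and Y2 [measurable]: "Y2 \<in> N \<rightarrow>\<^sub>M M"
    and [measurable]: "L \<in> borel_measurable N" "S \<in> sets M"
    and change: "(\<integral>\<^sup>+x. indicator S (Y1 x) \<partial>N) = (\<integral>\<^sup>+x. indicator S (Y2 x) * ennreal (exp (L x)) \<partial>N)"
    and tail: "(\<integral>\<^sup>+x. indicator {x. L x > \<epsilon>} x * ennreal (exp (L x)) \<partial>N) \<le> ennreal \<delta>"
  shows "emeasure N {x \<in> space N. Y1 x \<in> S} \<le> ennreal (exp \<epsilon>) * emeasure N {x \<in> space N. Y2 x \<in> S} + ennreal \<delta>"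
proof -
  have preimage: "emeasure N {x \<in> space N. Y x \<in> S} = (\<integral>\<^sup>+x. indicator S (Y x) \<partial>N)"
    if [measurable]: "Y \<in> N \<rightarrow>\<^sub>M M" for Y
  proof -
    have "emeasure N {x \<in> space N. Y x \<in> S} = (\<integral>\<^sup>+x. indicator {x \<in> space N. Y x \<in> S} x \<partial>N)"
      by (intro nn_integral_indicator[symmetric]) measurable
    also have "\<dots> = (\<integral>\<^sup>+x. indicator S (Y x) \<partial>N)"
      by (intro nn_integral_cong) (auto split: split_indicator)
    finally show ?thesis .
  qed
  have "emeasure N {x \<in> space N. Y1 x \<in> S} = (\<integral>\<^sup>+x. indicator S (Y2 x) * ennreal (exp (L x)) \<partial>N)"
    unfolding preimage[OF Y1] change ..
  also have "\<dots> \<le> (\<integral>\<^sup>+x. ennreal (exp \<epsilon>) * indicator S (Y2 x) + indicator {x. L x > \<epsilon>} x * ennreal (exp (L x)) \<partial>N)"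
    by (intro nn_integral_mono) (auto split: split_indicator intro!: ennreal_leI)
  also have "\<dots> = ennreal (exp \<epsilon>) * (\<integral>\<^sup>+x. indicator S (Y2 x) \<partial>N)
      + (\<integral>\<^sup>+x. indicator {x. L x > \<epsilon>} x * ennreal (exp (L x)) \<partial>N)"
    by (subst nn_integral_add) (auto simp: nn_integral_cmult)
  also have "\<dots> \<le> ennreal (exp \<epsilon>) * emeasure N {x \<in> space N. Y2 x \<in> S} + ennreal \<delta>"
    unfolding preimage[OF Y2] using tail by (rule add_left_mono)
  finally show ?thesis .
qed

lemma emeasure_perturbed_traj_le:
  fixes R :: "real^'n::finite^'n" and g1 g2 :: "nat \<Rightarrow> real^'d::finite^'n \<Rightarrow> real^'d^'n"
  assumes R: "pos_def_mat R"
    and g1: "\<And>t. g1 t \<in> borel_measurable borel" and g2: "\<And>t. g2 t \<in> borel_measurable borel"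
    and sensitivity: "\<And>t X. mahalanobis_sq (matrix_inv R) (g1 t X - g2 t X) \<le> \<beta>" and "\<beta> > 0"
    and \<delta>: "0 < \<delta>" "\<delta> < 1"
    and S: "S \<in> sets (PiM {..T} (\<lambda>_. borel :: (real^'d^'n) measure))"
  defines "N \<equiv> PiM {..<T} (\<lambda>_. noise_dist R)"
    and "\<epsilon> \<equiv> \<beta> / 2 * real T + 2 * sqrt (\<beta> / 2 * real T * ln (1 / \<delta>))"
  shows "emeasure N {V \<in> space N. restrict (perturbed_traj g1 W \<eta> x0 V) {..T} \<in> S}
    \<le> ennreal (exp \<epsilon>) * emeasure N {V \<in> space N. restrict (perturbed_traj g2 W \<eta> x0 V) {..T} \<in> S}
      + ennreal \<delta>"
proof (rule emeasure_le_of_likelihood_ratio)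
  let ?L = "traj_log_ratio (matrix_inv R) g1 g2 W \<eta> x0 T"
  show L: "?L \<in> borel_measurable N"
    unfolding N_def by (rule borel_measurable_traj_log_ratio[OF g1 g2])
  show "(\<integral>\<^sup>+V. indicator S (restrict (perturbed_traj g1 W \<eta> x0 V) {..T}) \<partial>N)
      = (\<integral>\<^sup>+V. indicator S (restrict (perturbed_traj g2 W \<eta> x0 V) {..T}) * ennreal (exp (?L V)) \<partial>N)"
    unfolding N_def by (rule nn_integral_perturbed_traj_change[OF R g1 g2]) (use S in measurable)
  show "(\<integral>\<^sup>+V. indicator {V. ?L V > \<epsilon>} V * ennreal (exp (?L V)) \<partial>N) \<le> ennreal \<delta>"
  proof (cases "T = 0")
    case True
    then have "?L V = 0" for V by (simp add: traj_log_ratio_def)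
    moreover have "\<epsilon> \<ge> 0" using \<open>\<beta> > 0\<close> \<delta> by (simp add: \<epsilon>_def)
    ultimately show ?thesis by simp
  next
    case False
    have "(\<integral>\<^sup>+V. ennreal (exp ((1 + l) * ?L V)) \<partial>N) \<le> ennreal (exp (l * (1 + l) * (\<beta> / 2 * real T)))"
      if "l \<ge> 0" for l
      using nn_integral_exp_traj_log_ratio_le[OF R g1 g2 _ sensitivity, of "1 + l"] that
      by (simp add: N_def power2_eq_square algebra_simps)
    then show ?thesis
      unfolding \<epsilon>_def using False \<open>\<beta> > 0\<close> by (intro zcdp_privacy_loss_tail[OF L _ \<delta>]) simp_all
  qed
qed (use S measurable_restrict_perturbed_traj[OF g1] measurable_restrict_perturbed_traj[OF g2] in
  \<open>simp_all add: N_def\<close>)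

section \<open>Decentralized SGD with clipped gradients\<close>

definition clipped_grads ::
  "(nat \<Rightarrow> 'n::finite \<Rightarrow> 'data \<Rightarrow> real^'d::finite \<Rightarrow> 's \<Rightarrow> real^'d) \<Rightarrow> real \<Rightarrow> ('n \<Rightarrow> 'data) \<Rightarrow> 's
   \<Rightarrow> nat \<Rightarrow> real^'d^'n \<Rightarrow> real^'d^'n" where
  "clipped_grads sg C D \<xi> t X = (\<chi> i. clip C (sg t i (D i) (X$i) \<xi>))"

lemma dsgd_traj_eq_perturbed_traj:
  "dsgd_traj sg C W \<eta> x0 D \<xi> V = perturbed_traj (clipped_grads sg C D \<xi>) W \<eta> x0 V"
proof
  fix t show "dsgd_traj sg C W \<eta> x0 D \<xi> V t = perturbed_traj (clipped_grads sg C D \<xi>) W \<eta> x0 V t"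
    by (induction t) (simp_all add: clipped_grads_def Let_def)
qed

lemma norm_clip_le:
  assumes "C > 0"
  shows "norm (clip C g) \<le> C"
proof (cases "g = 0")
  case False
  then have "norm (clip C g) = min 1 (C / norm g) * norm g"
    using assms by (simp add: clip_def)
  also have "\<dots> \<le> C / norm g * norm g"
    by (intro mult_right_mono) auto
  finally show ?thesis using False by simp
qed (use assms in \<open>simp add: clip_def\<close>)

lemma borel_measurable_clip [measurable]: "clip C \<in> borel_measurable borel"
  unfolding clip_def[abs_def] by measurable

lemma borel_measurable_clipped_grads:
  assumes sg: "\<And>t i d. (\<lambda>(\<xi>, x). sg t i d x \<xi>) \<in> Q \<Otimes>\<^sub>M borel \<rightarrow>\<^sub>M borel" and \<xi>: "\<xi> \<in> space Q"
  shows "clipped_grads sg C D \<xi> t \<in> borel_measurable borel"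
  unfolding clipped_grads_def
proof (rule borel_measurable_vecI)
  fix i
  have [measurable]: "(\<lambda>x. sg t i (D i) x \<xi>) \<in> borel_measurable borel"
    using measurable_compose_Pair1[OF \<xi> sg] by simp
  show "(\<lambda>X. (\<chi> i. clip C (sg t i (D i) (X$i) \<xi>)) $ i) \<in> borel_measurable borel"
    by simp
qed

lemma mahalanobis_sq_single_row:
  assumes "\<And>i. i \<noteq> j \<Longrightarrow> B$i = 0"
  shows "mahalanobis_sq P B = P$j$j * (norm (B$j))\<^sup>2"
proof -
  have "column k B = (B$j$k) *\<^sub>R axis j 1" for k
    using assms by (auto simp: column_def vec_eq_iff axis_def)
  then have "mahalanobis_sq P B = (\<Sum>k\<in>UNIV. B$j$k * B$j$k * (axis j 1 \<bullet> (P *v axis j 1)))"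
    by (simp add: mahalanobis_sq_def matrix_vector_mult_scaleR mult.assoc)
  also have "axis j 1 \<bullet> (P *v axis j 1) = P$j$j"
    by (simp add: inner_axis' matrix_vector_mult_basis column_def)
  also have "(\<Sum>k\<in>UNIV. B$j$k * B$j$k * P$j$j) = P$j$j * (B$j \<bullet> B$j)"
    by (simp add: inner_vec_def sum_distrib_left mult_ac)
  finally show ?thesis by (simp add: power2_norm_eq_inner)
qed

lemma mahalanobis_sq_clipped_grads_le:
  assumes P: "pos_def_mat P" and C: "C > 0" and "agent_neighbors D D'"
  shows "mahalanobis_sq P (clipped_grads sg C D \<xi> t X - clipped_grads sg C D' \<xi> t X)
    \<le> 4 * C\<^sup>2 * (MAX i. P$i$i)"
proof -
  obtain j where j: "\<And>i. i \<noteq> j \<Longrightarrow> D i = D' i"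
    using assms(3) unfolding agent_neighbors_def by auto
  define B where "B = clipped_grads sg C D \<xi> t X - clipped_grads sg C D' \<xi> t X"
  have "norm (B$j) \<le> norm (clip C (sg t j (D j) (X$j) \<xi>)) + norm (clip C (sg t j (D' j) (X$j) \<xi>))"
    by (simp add: B_def clipped_grads_def norm_triangle_ineq4)
  also have "\<dots> \<le> 2 * C"
    using add_mono[OF norm_clip_le[OF C] norm_clip_le[OF C]] by simp
  finally have "(norm (B$j))\<^sup>2 \<le> (2 * C)\<^sup>2"
    by (intro power_mono) auto
  moreover have "P$j$j \<le> (MAX i. P$i$i)" by (rule Max_ge) auto
  ultimately have "P$j$j * (norm (B$j))\<^sup>2 \<le> (MAX i. P$i$i) * (2 * C)\<^sup>2"
    using pos_def_mat_diag_pos[OF P, of j] pos_def_mat_Max_diag_pos[OF P] by (intro mult_mono) auto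
  moreover have "mahalanobis_sq P B = P$j$j * (norm (B$j))\<^sup>2"
    by (rule mahalanobis_sq_single_row) (simp add: B_def clipped_grads_def j)
  ultimately show ?thesis by (simp add: B_def power2_eq_square mult_ac)
qed

lemma borel_measurable_dsgd_traj:
  assumes sg: "\<And>t i d. (\<lambda>(\<xi>, x). sg t i d x \<xi>) \<in> Q \<Otimes>\<^sub>M borel \<rightarrow>\<^sub>M borel"
  shows "t \<le> T \<Longrightarrow> (\<lambda>(\<xi>, V). dsgd_traj sg C W \<eta> x0 D \<xi> V t)
    \<in> borel_measurable (Q \<Otimes>\<^sub>M PiM {..<T} (\<lambda>_. noise_dist R))"
proof (induction t)
  case (Suc t)
  let ?M = "Q \<Otimes>\<^sub>M PiM {..<T} (\<lambda>_. noise_dist R)"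
  let ?X = "\<lambda>p. dsgd_traj sg C W \<eta> x0 D (fst p) (snd p) t"
  have [measurable]: "?X \<in> borel_measurable ?M"
    using Suc by (simp add: case_prod_beta)
  have [measurable]: "(\<lambda>p. sg t i (D i) (?X p $ i) (fst p)) \<in> borel_measurable ?M" for i
    using measurable_compose[of "\<lambda>p. (fst p, ?X p $ i)" ?M "Q \<Otimes>\<^sub>M borel", OF _ sg] by simp
  have [measurable]: "(\<lambda>p. clipped_grads sg C D (fst p) t (?X p)) \<in> borel_measurable ?M"
    unfolding clipped_grads_def by (rule borel_measurable_vecI) simp
  note [measurable] = borel_measurable_noise_seq_nth[of t T R]
  show ?case
    using Suc.prems by (simp add: case_prod_beta Let_def clipped_grads_def[symmetric])
qed (simp add: case_prod_beta)

lemma measurable_dsgd_traj_restrict: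
  assumes "\<And>t i d. (\<lambda>(\<xi>, x). sg t i d x \<xi>) \<in> Q \<Otimes>\<^sub>M borel \<rightarrow>\<^sub>M borel"
  shows "(\<lambda>(\<xi>, V). restrict (dsgd_traj sg C W \<eta> x0 D \<xi> V) {..T})
    \<in> Q \<Otimes>\<^sub>M PiM {..<T} (\<lambda>_. noise_dist R) \<rightarrow>\<^sub>M PiM {..T} (\<lambda>_. borel)"
proof -
  have "(\<lambda>p. restrict (\<lambda>t. dsgd_traj sg C W \<eta> x0 D (fst p) (snd p) t) {..T})
      \<in> Q \<Otimes>\<^sub>M PiM {..<T} (\<lambda>_. noise_dist R) \<rightarrow>\<^sub>M PiM {..T} (\<lambda>_. borel)"
    by (rule measurable_restrict) (use borel_measurable_dsgd_traj[where sg=sg and Q=Q, OF assms] in \<open>simp add: case_prod_beta\<close>)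
  then show ?thesis by (simp add: case_prod_beta)
qed

lemma prob_space_dsgd_mech:
  assumes "prob_space Q" and "\<And>t i d. (\<lambda>(\<xi>, x). sg t i d x \<xi>) \<in> Q \<Otimes>\<^sub>M borel \<rightarrow>\<^sub>M borel"
    and "pos_def_mat R"
  shows "prob_space (dsgd_mech Q sg C R W \<eta> x0 T D)"
  unfolding dsgd_mech_def
  by (intro prob_space.prob_space_distr prob_space_pair assms(1) prob_space_PiM prob_space_noise_dist assms(3))
    (rule measurable_dsgd_traj_restrict[where sg=sg and Q=Q, OF assms(2)])

text \<open>By Fubini, the output distribution is a mixture over the sampling randomness \<open>\<xi>\<close>
  of the output distributions of the noisy iteration with frozen gradient maps.\<close>
lemma emeasure_dsgd_mech:
  fixes sg :: "nat \<Rightarrow> 'n::finite \<Rightarrow> 'data \<Rightarrow> real^'d::finite \<Rightarrow> 's \<Rightarrow> real^'d"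
  assumes Q: "prob_space Q" and sg: "\<And>t i d. (\<lambda>(\<xi>, x). sg t i d x \<xi>) \<in> Q \<Otimes>\<^sub>M borel \<rightarrow>\<^sub>M borel"
    and R: "pos_def_mat R" and S: "S \<in> sets (PiM {..T} (\<lambda>_. borel))"
  defines "N \<equiv> PiM {..<T} (\<lambda>_. noise_dist R)"
  shows "emeasure (dsgd_mech Q sg C R W \<eta> x0 T D) S = (\<integral>\<^sup>+\<xi>.
      emeasure N {V \<in> space N. restrict (perturbed_traj (clipped_grads sg C D \<xi>) W \<eta> x0 V) {..T} \<in> S} \<partial>Q)"
    and "(\<lambda>\<xi>. emeasure N {V \<in> space N. restrict (perturbed_traj (clipped_grads sg C D \<xi>) W \<eta> x0 V) {..T} \<in> S})
      \<in> borel_measurable Q"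
proof -
  define p where "p \<xi> = emeasure N {V \<in> space N. restrict (perturbed_traj (clipped_grads sg C D \<xi>) W \<eta> x0 V) {..T} \<in> S}"
    for \<xi>
  interpret Q: prob_space Q by (rule Q)
  interpret N: prob_space N
    unfolding N_def by (intro prob_space_PiM prob_space_noise_dist R)
  let ?F = "\<lambda>(\<xi>, V). restrict (dsgd_traj sg C W \<eta> x0 D \<xi> V) {..T}"
  have F: "?F \<in> Q \<Otimes>\<^sub>M N \<rightarrow>\<^sub>M PiM {..T} (\<lambda>_. borel)"
    unfolding N_def by (rule measurable_dsgd_traj_restrict[OF sg])
  then have A: "?F -` S \<inter> space (Q \<Otimes>\<^sub>M N) \<in> sets (Q \<Otimes>\<^sub>M N)"
    using S by measurable
  have slice: "Pair \<xi> -` (?F -` S \<inter> space (Q \<Otimes>\<^sub>M N)) = {V \<in> space N. restrict (perturbed_traj (clipped_grads sg C D \<xi>) W \<eta> x0 V) {..T} \<in> S}"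
    if "\<xi> \<in> space Q" for \<xi>
    using that by (auto simp: space_pair_measure dsgd_traj_eq_perturbed_traj)
  have "emeasure (dsgd_mech Q sg C R W \<eta> x0 T D) S = emeasure (Q \<Otimes>\<^sub>M N) (?F -` S \<inter> space (Q \<Otimes>\<^sub>M N))"
    unfolding dsgd_mech_def N_def[symmetric] by (rule emeasure_distr[OF F S])
  also have "\<dots> = (\<integral>\<^sup>+\<xi>. emeasure N (Pair \<xi> -` (?F -` S \<inter> space (Q \<Otimes>\<^sub>M N))) \<partial>Q)"
    by (rule N.emeasure_pair_measure_alt[OF A])
  also have "\<dots> = (\<integral>\<^sup>+\<xi>. p \<xi> \<partial>Q)"
    by (intro nn_integral_cong) (simp only: slice p_def)
  finally show "emeasure (dsgd_mech Q sg C R W \<eta> x0 T D) S = (\<integral>\<^sup>+\<xi>. p \<xi> \<partial>Q)"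
    unfolding p_def .
  show "p \<in> borel_measurable Q"
    unfolding p_def[abs_def] using N.measurable_emeasure_Pair[OF A]
    by (rule measurable_cong[THEN iffD1, rotated]) (simp only: slice)
qed

lemma measure_dsgd_mech_le:
  fixes sg :: "nat \<Rightarrow> 'n::finite \<Rightarrow> 'data \<Rightarrow> real^'d::finite \<Rightarrow> 's \<Rightarrow> real^'d"
  assumes Q: "prob_space Q" and sg: "\<And>t i d. (\<lambda>(\<xi>, x). sg t i d x \<xi>) \<in> Q \<Otimes>\<^sub>M borel \<rightarrow>\<^sub>M borel"
    and R: "pos_def_mat R" and S: "S \<in> sets (PiM {..T} (\<lambda>_. borel))" and "\<delta> \<ge> 0"
  defines "N \<equiv> PiM {..<T} (\<lambda>_. noise_dist R)"
  assumes le: "\<And>\<xi>. \<xi> \<in> space Q \<Longrightarrow>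
      emeasure N {V \<in> space N. restrict (perturbed_traj (clipped_grads sg C D \<xi>) W \<eta> x0 V) {..T} \<in> S}
      \<le> ennreal (exp \<epsilon>) * emeasure N {V \<in> space N. restrict (perturbed_traj (clipped_grads sg C D' \<xi>) W \<eta> x0 V) {..T} \<in> S}
        + ennreal \<delta>"
  shows "measure (dsgd_mech Q sg C R W \<eta> x0 T D) S \<le> exp \<epsilon> * measure (dsgd_mech Q sg C R W \<eta> x0 T D') S + \<delta>"
proof -
  interpret Q: prob_space Q by (rule Q)
  note mixture = emeasure_dsgd_mech[OF Q sg R S, folded N_def]
  have "emeasure (dsgd_mech Q sg C R W \<eta> x0 T D) S
      \<le> (\<integral>\<^sup>+\<xi>. ennreal (exp \<epsilon>) * emeasure N {V \<in> space N.
          restrict (perturbed_traj (clipped_grads sg C D' \<xi>) W \<eta> x0 V) {..T} \<in> S} + ennreal \<delta> \<partial>Q)"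
    unfolding mixture(1) by (intro nn_integral_mono le)
  also have "\<dots> = ennreal (exp \<epsilon>) * emeasure (dsgd_mech Q sg C R W \<eta> x0 T D') S + ennreal \<delta>"
    unfolding mixture(1) using mixture(2)[where D=D']
    by (subst nn_integral_add) (auto simp: nn_integral_cmult Q.emeasure_space_1)
  finally have "emeasure (dsgd_mech Q sg C R W \<eta> x0 T D) S
      \<le> ennreal (exp \<epsilon>) * emeasure (dsgd_mech Q sg C R W \<eta> x0 T D') S + ennreal \<delta>" .
  moreover have "emeasure (dsgd_mech Q sg C R W \<eta> x0 T D'') S = ennreal (measure (dsgd_mech Q sg C R W \<eta> x0 T D'') S)"
    for D''
    by (intro finite_measure.emeasure_eq_measure prob_space.axioms(1) prob_space_dsgd_mech Q sg R)
  ultimately have "ennreal (measure (dsgd_mech Q sg C R W \<eta> x0 T D) S)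
      \<le> ennreal (exp \<epsilon> * measure (dsgd_mech Q sg C R W \<eta> x0 T D') S + \<delta>)"
    using \<open>\<delta> \<ge> 0\<close> by (simp add: ennreal_mult)
  then show ?thesis
    using \<open>\<delta> \<ge> 0\<close> by (subst (asm) ennreal_le_iff) auto
qed

theorem theorem2:
  fixes Q :: "'s measure"
    and sg :: "nat \<Rightarrow> 'n::finite \<Rightarrow> 'data \<Rightarrow> real^'d \<Rightarrow> 's \<Rightarrow> real^'d"
    and C \<delta> :: real and R W :: "real^'n^'n" and \<eta> :: "nat \<Rightarrow> real"
    and x0 :: "real^'d^'n" and T :: nat
  assumes "prob_space Q"
    and "\<And>t i d. (\<lambda>(\<xi>, x). sg t i d x \<xi>) \<in> Q \<Otimes>\<^sub>M borel \<rightarrow>\<^sub>M borel"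
    and "C > 0"
    and "pos_def_mat R"
    and "0 < \<delta>" and "\<delta> < 1"
  shows "agent_level_DP (dsgd_mech Q sg C R W \<eta> x0 T)
           (2 * C\<^sup>2 * real T * (MAX i. matrix_inv R $ i $ i)
            + 2 * C * sqrt (2 * real T * ln (1 / \<delta>) * (MAX i. matrix_inv R $ i $ i)))
           \<delta>"
proof -
  note Q = assms(1) and sg = assms(2) and C = assms(3) and R = assms(4) and \<delta> = assms(5,6)
  define r where "r = (MAX i. matrix_inv R $ i $ i)"
  define \<beta> where "\<beta> = 4 * C\<^sup>2 * r"
  have "r > 0"
    unfolding r_def by (rule pos_def_mat_Max_diag_pos[OF pos_def_mat_matrix_inv[OF R]])
  then have "\<beta> > 0" using C by (simp add: \<beta>_def)
  have \<epsilon>: "2 * C\<^sup>2 * real T * r + 2 * C * sqrt (2 * real T * ln (1 / \<delta>) * r)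
      = \<beta> / 2 * real T + 2 * sqrt (\<beta> / 2 * real T * ln (1 / \<delta>))"
    using C by (simp add: \<beta>_def real_sqrt_mult algebra_simps)
  show ?thesis
    unfolding agent_level_DP_def r_def[symmetric] \<epsilon>
  proof (intro allI impI ballI)
    fix D D' :: "'n \<Rightarrow> 'data" and S
    assume "agent_neighbors D D'" and "S \<in> sets (dsgd_mech Q sg C R W \<eta> x0 T D)"
    then have S: "S \<in> sets (PiM {..T} (\<lambda>_. borel))" by (simp add: dsgd_mech_def)
    show "measure (dsgd_mech Q sg C R W \<eta> x0 T D) S
        \<le> exp (\<beta> / 2 * real T + 2 * sqrt (\<beta> / 2 * real T * ln (1 / \<delta>)))
          * measure (dsgd_mech Q sg C R W \<eta> x0 T D') S + \<delta>"
      using \<delta>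
      by (intro measure_dsgd_mech_le[OF Q sg R S] emeasure_perturbed_traj_le[OF R _ _ _ \<open>\<beta> > 0\<close> \<delta> S]
          borel_measurable_clipped_grads[OF sg])
        (simp_all add: \<beta>_def r_def mahalanobis_sq_clipped_grads_le[OF pos_def_mat_matrix_inv[OF R] C
          \<open>agent_neighbors D D'\<close>])
  qed
qed

end
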